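(* Let $d\ge2$, let $\mathfrak{F}$ be an ordered field or a field that has more than two elements, and let $\mathcal{G}$ be a field-definable coordinate geometry over $\mathfrak{F}$ (of dimension $d$). Then $$\mathrm{Aut}(\mathcal{G})=\mathrm{AffAut}(\mathcal{G})\circ\mathrm{Aut}_{\mathrm{ind}}(\mathfrak{F})=\{A\circ\widetilde{\alpha}: A\in\mathrm{AffAut}(\mathcal{G}),\ \alpha\in\mathrm{Aut}(\mathfrak{F})\}.$$ Moreover, for each automorphism $g$ of $\mathcal{G}$, the decomposition $g=A\circ\widetilde{\alpha}$ with $A\in\mathrm{AffAut}(\mathcal{G})$ and $\widetilde{\alpha}\in\mathrm{Aut}_{\mathrm{ind}}(\mathfrak{F})$ is unique.
   Context: A field is $\langle F,+,\cdot,0,1\rangle$; an ordered field is $\langle F,+,\cdot,0,1,\le\rangle$. "Definable" means first-order definable without parameters. For points of $F^d$: ${\mathsf{Col}}(\vec p,\vec q,\vec r)$ iff $\vec q=\vec p+\lambda(\vec r-\vec p)$ for some $\lambda\in F$ or $\vec r=\vec p$; for an ordered field, ${\mathsf{Bw}}(\vec p,\vec q,\vec r)$ iff $\vec q=\vec p+\lambda(\vec r-\vec p)$ for some $\lambda\in F$ with $0\le\lambda\le1$. An $n$-ary relation on $F^d$ is definable over $\mathfrak{F}$ iff the corresponding $dn$-ary relation on $F$ obtained by listing coordinates of the $n$ points consecutively is definable in $\mathfrak{F}$. A coordinate geometry over a field (resp. ordered field) $\mathfrak{F}$ is a model with universe $F^d$, only relation symbols in its language, in which ${\mathsf{Col}}$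 (resp. ${\mathsf{Bw}}$) is definable; it is field-definable if all its relations are definable over $\mathfrak{F}$. An affine transformation of $F^d$ is an invertible linear map followed by a translation; $\mathrm{AffAut}(\mathcal{G})$ is the set of automorphisms of $\mathcal{G}$ that are affine transformations. For a map $f:F\to F$, $\widetilde f:F^d\to F^d$ is $\widetilde f(\langle p_1,\dots,p_d\rangle)=\langle f(p_1),\dots,f(p_d)\rangle$, and $\mathrm{Aut}_{\mathrm{ind}}(\mathfrak{F})=\{\widetilde\alpha:\alpha\in\mathrm{Aut}(\mathfrak{F})\}$. *)

theory Defs
  imports Main
begin

definition points :: "nat \<Rightarrow> 'a list set" where
  "points d = {p. length p = d}"

definition padd :: "'a::field list \<Rightarrow> 'a list \<Rightarrow> 'a list" where
  "padd p q = map2 (+) p q"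

definition psub :: "'a::field list \<Rightarrow> 'a list \<Rightarrow> 'a list" where
  "psub p q = map2 (-) p q"

definition psmult :: "'a::field \<Rightarrow> 'a list \<Rightarrow> 'a list" where
  "psmult c p = map (\<lambda>x. c * x) p"

definition Col :: "'a::field list \<Rightarrow> 'a list \<Rightarrow> 'a list \<Rightarrow> bool" where
  "Col p q r \<longleftrightarrow> (\<exists>c. q = padd p (psmult c (psub r p))) \<or> r = p"

definition Bw :: "('a::field \<Rightarrow> 'a \<Rightarrow> bool) \<Rightarrow> 'a list \<Rightarrow> 'a list \<Rightarrow> 'a list \<Rightarrow> bool" where
  "Bw le p q r \<longleftrightarrow> (\<exists>c. q = padd p (psmult c (psub r p)) \<and> le 0 c \<and> le c 1)"

definition ordered_field_rel :: "('a::field \<Rightarrow> 'a \<Rightarrow> bool) \<Rightarrow> bool" where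
  "ordered_field_rel le \<longleftrightarrow>
     (\<forall>x. le x x) \<and> (\<forall>x y. le x y \<and> le y x \<longrightarrow> x = y) \<and>
     (\<forall>x y z. le x y \<and> le y z \<longrightarrow> le x z) \<and> (\<forall>x y. le x y \<or> le y x) \<and>
     (\<forall>x y z. le x y \<longrightarrow> le (x + z) (y + z)) \<and>
     (\<forall>x y. le 0 x \<and> le 0 y \<longrightarrow> le 0 (x * y))"

text \<open>The field structure is the type 'a with +, *, 0, 1; the optional order
  le (Some r for an ordered field, None for a plain field) determines whether
  the symbol for the order is part of the language.\<close>

datatype fterm = FVar nat | FZero | FOne | FAdd fterm fterm | FMul fterm fterm

datatype fform = FEq fterm fterm | FLe fterm fterm | FNot fform
  | FConj fform fform | FEx nat fform

primrec feval :: "fterm \<Rightarrow> (nat \<Rightarrow> 'a::field) \<Rightarrow> 'a" where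
  "feval (FVar n) e = e n"
| "feval FZero e = 0"
| "feval FOne e = 1"
| "feval (FAdd s t) e = feval s e + feval t e"
| "feval (FMul s t) e = feval s e * feval t e"

primrec le_free :: "fform \<Rightarrow> bool" where
  "le_free (FEq s t) = True"
| "le_free (FLe s t) = False"
| "le_free (FNot \<phi>) = le_free \<phi>"
| "le_free (FConj \<phi> \<psi>) = (le_free \<phi> \<and> le_free \<psi>)"
| "le_free (FEx n \<phi>) = le_free \<phi>"

primrec fsat :: "('a::field \<Rightarrow> 'a \<Rightarrow> bool) option \<Rightarrow> fform \<Rightarrow> (nat \<Rightarrow> 'a) \<Rightarrow> bool" where
  "fsat le (FEq s t) e = (feval s e = feval t e)"
| "fsat le (FLe s t) e = (case le of Some r \<Rightarrow> r (feval s e) (feval t e) | None \<Rightarrow> False)"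
| "fsat le (FNot \<phi>) e = (\<not> fsat le \<phi> e)"
| "fsat le (FConj \<phi> \<psi>) e = (fsat le \<phi> e \<and> fsat le \<psi> e)"
| "fsat le (FEx n \<phi>) e = (\<exists>x. fsat le \<phi> (e(n := x)))"

definition fform_of :: "('a::field \<Rightarrow> 'a \<Rightarrow> bool) option \<Rightarrow> fform \<Rightarrow> bool" where
  "fform_of le \<phi> \<longleftrightarrow> (le = None \<longrightarrow> le_free \<phi>)"

definition field_definable_rel ::
  "('a::field \<Rightarrow> 'a \<Rightarrow> bool) option \<Rightarrow> nat \<Rightarrow> ('a list \<Rightarrow> bool) \<Rightarrow> bool" where
  "field_definable_rel le m R \<longleftrightarrow>
     (\<exists>\<phi>. fform_of le \<phi> \<and> (\<forall>e. fsat le \<phi> e \<longleftrightarrow> R (map e [0..<m])))"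

definition to_points :: "nat \<Rightarrow> nat \<Rightarrow> 'a list \<Rightarrow> 'a list list" where
  "to_points d n xs = map (\<lambda>k. take d (drop (k * d) xs)) [0..<n]"

text \<open>A geometry is given by a family of relation symbols of type 'i with arities
  arity i, interpreted by rel i on arity i -tuples (lists) of points.\<close>

datatype 'i rform = RRel 'i "nat list" | REq nat nat | RNot "'i rform"
  | RConj "'i rform" "'i rform" | REx nat "'i rform"

primrec rsat :: "nat \<Rightarrow> ('i \<Rightarrow> nat) \<Rightarrow> ('i \<Rightarrow> 'a list list \<Rightarrow> bool) \<Rightarrow> 'i rform
    \<Rightarrow> (nat \<Rightarrow> 'a list) \<Rightarrow> bool" where
  "rsat d ar rel (RRel i vs) e = (length vs = ar i \<and> rel i (map e vs))"
| "rsat d ar rel (REq m n) e = (e m = e n)"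
| "rsat d ar rel (RNot \<phi>) e = (\<not> rsat d ar rel \<phi> e)"
| "rsat d ar rel (RConj \<phi> \<psi>) e = (rsat d ar rel \<phi> e \<and> rsat d ar rel \<psi> e)"
| "rsat d ar rel (REx n \<phi>) e = (\<exists>p\<in>points d. rsat d ar rel \<phi> (e(n := p)))"

definition geom_definable3 :: "nat \<Rightarrow> ('i \<Rightarrow> nat) \<Rightarrow> ('i \<Rightarrow> 'a list list \<Rightarrow> bool)
    \<Rightarrow> ('a list \<Rightarrow> 'a list \<Rightarrow> 'a list \<Rightarrow> bool) \<Rightarrow> bool" where
  "geom_definable3 d ar rel T \<longleftrightarrow>
     (\<exists>\<phi>. \<forall>e. (\<forall>n. e n \<in> points d) \<longrightarrow> (rsat d ar rel \<phi> e \<longleftrightarrow> T (e 0) (e 1) (e 2)))"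

definition coord_geom :: "('a::field \<Rightarrow> 'a \<Rightarrow> bool) option \<Rightarrow> nat \<Rightarrow> ('i \<Rightarrow> nat)
    \<Rightarrow> ('i \<Rightarrow> 'a list list \<Rightarrow> bool) \<Rightarrow> bool" where
  "coord_geom le d ar rel \<longleftrightarrow>
     (case le of None \<Rightarrow> geom_definable3 d ar rel Col
               | Some r \<Rightarrow> geom_definable3 d ar rel (Bw r))"

definition field_definable_geom :: "('a::field \<Rightarrow> 'a \<Rightarrow> bool) option \<Rightarrow> nat \<Rightarrow> ('i \<Rightarrow> nat)
    \<Rightarrow> ('i \<Rightarrow> 'a list list \<Rightarrow> bool) \<Rightarrow> bool" where
  "field_definable_geom le d ar rel \<longleftrightarrow>
     (\<forall>i. field_definable_rel le (d * ar i) (\<lambda>xs. rel i (to_points d (ar i) xs)))"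

definition geom_aut :: "nat \<Rightarrow> ('i \<Rightarrow> nat) \<Rightarrow> ('i \<Rightarrow> 'a list list \<Rightarrow> bool)
    \<Rightarrow> ('a list \<Rightarrow> 'a list) \<Rightarrow> bool" where
  "geom_aut d ar rel g \<longleftrightarrow> bij_betw g (points d) (points d) \<and>
     (\<forall>i ps. length ps = ar i \<and> set ps \<subseteq> points d \<longrightarrow> (rel i ps \<longleftrightarrow> rel i (map g ps)))"

definition field_aut :: "('a::field \<Rightarrow> 'a \<Rightarrow> bool) option \<Rightarrow> ('a \<Rightarrow> 'a) \<Rightarrow> bool" where
  "field_aut le \<alpha> \<longleftrightarrow> bij \<alpha> \<and>
     (\<forall>x y. \<alpha> (x + y) = \<alpha> x + \<alpha> y) \<and> (\<forall>x y. \<alpha> (x * y) = \<alpha> x * \<alpha> y) \<and>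
     \<alpha> 0 = 0 \<and> \<alpha> 1 = 1 \<and>
     (\<forall>r. le = Some r \<longrightarrow> (\<forall>x y. r x y \<longleftrightarrow> r (\<alpha> x) (\<alpha> y)))"

definition ind_map :: "('a \<Rightarrow> 'a) \<Rightarrow> 'a list \<Rightarrow> 'a list" where
  "ind_map \<alpha> p = map \<alpha> p"

definition mat_vec :: "nat \<Rightarrow> (nat \<Rightarrow> nat \<Rightarrow> 'a::field) \<Rightarrow> 'a list \<Rightarrow> 'a list" where
  "mat_vec d M p = map (\<lambda>i. \<Sum>j<d. M i j * p ! j) [0..<d]"

definition invertible_mat :: "nat \<Rightarrow> (nat \<Rightarrow> nat \<Rightarrow> 'a::field) \<Rightarrow> bool" where
  "invertible_mat d M \<longleftrightarrow> (\<exists>N. \<forall>i<d. \<forall>j<d.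
      (\<Sum>k<d. N i k * M k j) = (if i = j then 1 else 0) \<and>
      (\<Sum>k<d. M i k * N k j) = (if i = j then 1 else 0))"

definition affine_transf :: "nat \<Rightarrow> ('a::field list \<Rightarrow> 'a list) \<Rightarrow> bool" where
  "affine_transf d A \<longleftrightarrow> (\<exists>M b. b \<in> points d \<and> invertible_mat d M \<and>
      (\<forall>p\<in>points d. A p = padd (mat_vec d M p) b))"

definition aff_aut :: "nat \<Rightarrow> ('i \<Rightarrow> nat) \<Rightarrow> ('i \<Rightarrow> 'a::field list list \<Rightarrow> bool)
    \<Rightarrow> ('a list \<Rightarrow> 'a list) \<Rightarrow> bool" where
  "aff_aut d ar rel A \<longleftrightarrow> affine_transf d A \<and> geom_aut d ar rel A"

end

theory Submission
  imports Defs
begin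

(*
  An automorphism g of the geometry preserves every relation definable in it, hence
  collinearity: Col is definable by assumption or, over an ordered field, it is the
  disjunction of three betweenness statements.  So g is a collineation of F^d, and the
  fundamental theorem of affine geometry (d >= 2, |F| > 2) makes it semi-affine.
  Parallelism is expressible by collinearity alone (coplanar lines that do not meet), so g
  maps parallelograms to parallelograms and lin p = g p - g 0 is additive.  Since lin maps
  lines through 0 onto lines through 0, lin (l v) = alpha l * lin v, and comparing two
  independent directions shows that alpha l does not depend on v.  Then alpha is a field
  automorphism, preserving the order whenever g preserves betweenness, and
  lin p = M (map alpha p) for the matrix M of the images of the unit vectors.
  Conversely map alpha preserves every field-definable relation, so g o map alpha^-1 is an
  affine automorphism.  Uniqueness of the decomposition is read off on the line through 0
  and e_0.
*)

lemma in_points [simp]: "p \<in> points d \<longleftrightarrow> length p = d"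
  by (simp add: points_def)

lemma length_padd [simp]: "length (padd p q) = min (length p) (length q)"
  by (simp add: padd_def)

lemma length_psub [simp]: "length (psub p q) = min (length p) (length q)"
  by (simp add: psub_def)

lemma length_psmult [simp]: "length (psmult c p) = length p"
  by (simp add: psmult_def)

lemma nth_padd [simp]: "i < length p \<Longrightarrow> i < length q \<Longrightarrow> padd p q ! i = p!i + q!i"
  by (simp add: padd_def)

lemma nth_psub [simp]: "i < length p \<Longrightarrow> i < length q \<Longrightarrow> psub p q ! i = p!i - q!i"
  by (simp add: psub_def)

lemma nth_psmult [simp]: "i < length p \<Longrightarrow> psmult c p ! i = c * p!i"
  by (simp add: psmult_def)

definition zvec :: "nat \<Rightarrow> 'a::field list" where
  "zvec d = replicate d 0"

definition uvec :: "nat \<Rightarrow> nat \<Rightarrow> 'a::field list" where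
  "uvec d j = map (\<lambda>i. if i = j then 1 else 0) [0..<d]"

lemma length_zvec [simp]: "length (zvec d) = d"
  by (simp add: zvec_def)

lemma nth_zvec [simp]: "i < d \<Longrightarrow> zvec d ! i = 0"
  by (simp add: zvec_def)

lemma length_uvec [simp]: "length (uvec d j) = d"
  by (simp add: uvec_def)

lemma nth_uvec [simp]: "i < d \<Longrightarrow> uvec d j ! i = (if i = j then 1 else 0)"
  by (simp add: uvec_def)

lemma points_eqI: "length x = d \<Longrightarrow> length y = d \<Longrightarrow> (\<And>i. i < d \<Longrightarrow> x!i = y!i) \<Longrightarrow> x = y"
  by (metis nth_equalityI)

lemma neq_zvecE:
  assumes "length v = d" "v \<noteq> zvec d"
  obtains i where "i < d" "v!i \<noteq> 0"
  using assms points_eqI[of v d "zvec d"] by auto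

lemma uvec_neq_zvec:
  assumes "j < d"
  shows "uvec d j \<noteq> (zvec d :: 'a::field list)"
proof -
  have "uvec d j ! j \<noteq> (zvec d :: 'a list) ! j" using assms by simp
  then show ?thesis by metis
qed

lemma psmult_right_cancel:
  assumes "length w = d" "w \<noteq> zvec d" "psmult m w = psmult m' w"
  shows "m = m'"
proof -
  obtain i where "i < d" "w!i \<noteq> 0" using neq_zvecE assms(1,2) .
  with arg_cong[OF assms(3), of "\<lambda>x. x!i"] assms(1) show ?thesis by simp
qed

section \<open>Collinearity and linear independence\<close>

lemma Col_iff_nth:
  assumes "length p = d" "length q = d" "length r = d"
  shows "Col p q r \<longleftrightarrow> (\<exists>c. \<forall>i<d. q!i = p!i + c * (r!i - p!i)) \<or> r = p"
proof -
  have "q = padd p (psmult c (psub r p)) \<longleftrightarrow> (\<forall>i<d. q!i = p!i + c * (r!i - p!i))" for c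
  proof
    assume "\<forall>i<d. q!i = p!i + c * (r!i - p!i)"
    then show "q = padd p (psmult c (psub r p))"
      by (intro points_eqI[of _ d]) (use assms in auto)
  qed (use assms in simp)
  then show ?thesis by (simp add: Col_def)
qed

lemma Col_iff_nth_neq:
  assumes "length p = d" "length q = d" "length r = d" "r \<noteq> p"
  shows "Col p q r \<longleftrightarrow> (\<exists>c. \<forall>i<d. q!i = p!i + c * (r!i - p!i))"
  using Col_iff_nth[OF assms(1-3)] assms(4) by simp

lemma Col_same12: "length p = d \<Longrightarrow> length r = d \<Longrightarrow> Col p p r"
  by (subst Col_iff_nth) (auto intro!: exI[of _ 0])

definition indep2 :: "nat \<Rightarrow> 'a::field list \<Rightarrow> 'a list \<Rightarrow> bool" where
  "indep2 d u v \<longleftrightarrow> (\<forall>s t. (\<forall>i<d. s * u!i + t * v!i = 0) \<longrightarrow> s = 0 \<and> t = 0)"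

lemma indep2I:
  "(\<And>s t. \<forall>i<d. s * u!i + t * v!i = 0 \<Longrightarrow> s = 0 \<and> t = 0) \<Longrightarrow> indep2 d u v"
  unfolding indep2_def by blast

lemma indep2D: "indep2 d u v \<Longrightarrow> \<forall>i<d. s * u!i + t * v!i = 0 \<Longrightarrow> s = 0 \<and> t = 0"
  unfolding indep2_def by blast

lemma indep2_coeff_unique:
  assumes "indep2 d u v" "\<forall>i<d. s * u!i + t * v!i = s' * u!i + t' * v!i"
  shows "s = s' \<and> t = t'"
proof -
  have "\<forall>i<d. (s - s') * u!i + (t - t') * v!i = 0"
    using assms(2) by (simp add: algebra_simps)
  from indep2D[OF assms(1) this] show ?thesis
    by simp
qed

lemma indep2_commute:
  assumes I: "indep2 d u v"
  shows "indep2 d v u"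
proof (rule indep2I)
  fix s t assume "\<forall>i<d. s * v!i + t * u!i = 0"
  then have "\<forall>i<d. t * u!i + s * v!i = 0" by (simp add: add.commute)
  from indep2D[OF I this] show "s = 0 \<and> t = 0" by simp
qed

lemma not_Col_iff_indep2:
  assumes L: "length a = d" "length b = d" "length c = d"
  shows "\<not> Col a b c \<longleftrightarrow> indep2 d (psub b a) (psub c a)"
proof
  assume "\<not> Col a b c"
  then have ca: "c \<noteq> a" and nl: "\<not> (\<exists>l. \<forall>i<d. b!i = a!i + l * (c!i - a!i))"
    using Col_iff_nth[OF L] by auto
  show "indep2 d (psub b a) (psub c a)"
  proof (rule indep2I)
    fix s t assume st: "\<forall>i<d. s * psub b a!i + t * psub c a!i = 0"
    then have E: "s * (b!i - a!i) + t * (c!i - a!i) = 0" if "i < d" for i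
      using L that by simp
    have "s = 0"
    proof (rule ccontr)
      assume "s \<noteq> 0"
      have "b!i = a!i + (- t / s) * (c!i - a!i)" if "i < d" for i
        using E[OF that] \<open>s \<noteq> 0\<close> by (simp add: field_simps)
      with nl show False by blast
    qed
    moreover have "t = 0"
    proof (rule ccontr)
      assume "t \<noteq> 0"
      with E \<open>s = 0\<close> have "c = a" by (intro points_eqI[of _ d]) (use L in auto)
      with ca show False ..
    qed
    ultimately show "s = 0 \<and> t = 0" ..
  qed
next
  assume I: "indep2 d (psub b a) (psub c a)"
  show "\<not> Col a b c"
  proof
    assume "Col a b c"
    then consider l where "\<forall>i<d. b!i = a!i + l * (c!i - a!i)" | "c = a"
      using Col_iff_nth[OF L] by blast
    then show False
    proof cases
      case (1 l)
      then have "\<forall>i<d. 1 * psub b a!i + (- l) * psub c a!i = 0" using L by simp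
      then show False using indep2D[OF I, of 1 "- l"] by simp
    next
      case 2
      then have "\<forall>i<d. 0 * psub b a!i + 1 * psub c a!i = 0" using L by simp
      then show False using indep2D[OF I, of 0 1] by simp
    qed
  qed
qed

lemma not_Col_coeff_unique:
  assumes "length a = d" "length b = d" "length c = d" "\<not> Col a b c"
    and "\<forall>i<d. s * (b!i - a!i) + t * (c!i - a!i) = s' * (b!i - a!i) + t' * (c!i - a!i)"
  shows "s = s' \<and> t = t'"
  using indep2_coeff_unique[of d "psub b a" "psub c a" s t s' t'] not_Col_iff_indep2[of a d b c] assms
  by simp

lemma not_Col_neq:
  assumes "length a = d" "length b = d" "length c = d" "\<not> Col a b c"
  shows "b \<noteq> a" "c \<noteq> a"
  using assms Col_same12[of a d c] by (auto simp: Col_def)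

lemma not_Col_zvec_iff_indep2:
  assumes "length v = d" "length w = d"
  shows "\<not> Col (zvec d) v w \<longleftrightarrow> indep2 d v w"
proof -
  have "psub v (zvec d) = v" "psub w (zvec d) = w"
    by (intro points_eqI[of _ d]; use assms in simp)+
  then show ?thesis using not_Col_iff_indep2[of "zvec d" d v w] assms by simp
qed

lemma Col_commute23:
  assumes "length a = d" "length b = d" "length c = d"
  shows "Col a c b \<longleftrightarrow> Col a b c"
  using not_Col_iff_indep2[of a d b c] not_Col_iff_indep2[of a d c b] assms
    indep2_commute[of d "psub b a" "psub c a"] indep2_commute[of d "psub c a" "psub b a"]
  by argo

lemma indep2_rebase:
  assumes L: "length p = d" "length q = d" "length w = d"
    and I: "indep2 d (psub p q) (psub w q)"
  shows "indep2 d (psub q p) (psub w p)"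
proof (rule indep2I)
  fix s t assume "\<forall>i<d. s * psub q p!i + t * psub w p!i = 0"
  then have "\<forall>i<d. (- (s + t)) * psub p q!i + t * psub w q!i = 0"
    using L by (simp add: algebra_simps)
  from indep2D[OF I this] show "s = 0 \<and> t = 0" by auto
qed

lemma Col_commute12:
  assumes L: "length p = d" "length q = d" "length w = d"
  shows "Col q p w \<longleftrightarrow> Col p q w"
proof -
  have "indep2 d (psub p q) (psub w q) \<longleftrightarrow> indep2 d (psub q p) (psub w p)"
    using indep2_rebase[OF L] indep2_rebase[OF L(2,1,3)] by argo
  then show ?thesis using not_Col_iff_indep2[OF L(2,1,3)] not_Col_iff_indep2[OF L] by argo
qed

lemma exists_not_Col:
  assumes "2 \<le> d" and L: "length a = d" "length b = d" and "b \<noteq> a"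
  shows "\<exists>p. length p = d \<and> \<not> Col a b p"
proof -
  obtain i where i: "i < d" "b!i \<noteq> a!i" using assms L points_eqI[of b d a] by blast
  define j where "j = (if i = 0 then 1 else 0 :: nat)"
  have j: "j < d" "j \<noteq> i" using assms(1) by (auto simp: j_def)
  define p where "p = padd a (uvec d j)"
  have "\<not> Col a b p"
  proof
    assume "Col a b p"
    moreover have "p!j \<noteq> a!j" using j L by (simp add: p_def)
    then have "p \<noteq> a" by blast
    ultimately obtain c where "\<forall>k<d. b!k = a!k + c * (p!k - a!k)"
      using Col_iff_nth_neq[of a d b p] L by (auto simp: p_def)
    then have "b!i = a!i + c * (p!i - a!i)" using i by blast
    with i j L show False by (simp add: p_def)
  qed
  moreover have "length p = d" using L by (simp add: p_def)
  ultimately show ?thesis by blast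
qed

lemma Col_psub_iff:
  assumes L: "length p = d" "length q = d" "length r = d" "length t = d"
  shows "Col (psub p t) (psub q t) (psub r t) \<longleftrightarrow> Col p q r"
proof -
  have "psub r t = psub p t \<longleftrightarrow> r = p"
  proof
    assume E: "psub r t = psub p t"
    have "r!i = p!i" if "i < d" for i
      using arg_cong[OF E, of "\<lambda>x. x!i"] that L by simp
    then show "r = p" by (intro points_eqI[OF L(3,1)])
  qed simp
  moreover have "(psub q t!i = psub p t!i + c * (psub r t!i - psub p t!i)) \<longleftrightarrow>
      (q!i = p!i + c * (r!i - p!i))" if "i < d" for i c
    using that L by (simp add: algebra_simps)
  ultimately show ?thesis
    using Col_iff_nth[OF L(1-3)] Col_iff_nth[of "psub p t" d "psub q t" "psub r t"] L by simp
qed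

section \<open>Planes and parallels in terms of collinearity\<close>

text \<open>Both notions are expressed through \<^const>\<open>Col\<close> alone, so collineations preserve them.
  For non-collinear \<open>a, b, c\<close>, \<open>in_plane d a b c\<close> is the affine plane through \<open>a, b, c\<close> and
  \<open>parallel d a b c e\<close> says that \<open>ce\<close> is parallel to \<open>ab\<close>.\<close>

definition in_plane :: "nat \<Rightarrow> 'a::field list \<Rightarrow> 'a list \<Rightarrow> 'a list \<Rightarrow> 'a list \<Rightarrow> bool" where
  "in_plane d a b c x \<longleftrightarrow>
     (\<exists>y\<in>points d. \<exists>z\<in>points d. Col a y b \<and> Col a z c \<and> y \<noteq> z \<and> Col y x z)"

definition parallel :: "nat \<Rightarrow> 'a::field list \<Rightarrow> 'a list \<Rightarrow> 'a list \<Rightarrow> 'a list \<Rightarrow> bool" where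
  "parallel d a b c e \<longleftrightarrow> in_plane d a b c e \<and> \<not> (\<exists>x\<in>points d. Col a x b \<and> Col c x e)"

lemma in_planeD:
  assumes L: "length a = d" "length b = d" "length c = d" "length x = d"
    and nc: "\<not> Col a b c" and "in_plane d a b c x"
  shows "\<exists>s t. \<forall>i<d. x!i = a!i + s * (b!i - a!i) + t * (c!i - a!i)"
proof -
  obtain y z where yz: "length y = d" "length z = d" "Col a y b" "Col a z c" "y \<noteq> z" "Col y x z"
    using \<open>in_plane d a b c x\<close> by (auto simp: in_plane_def)
  have "b \<noteq> a" "c \<noteq> a" using not_Col_neq[OF L(1-3) nc] by auto
  then obtain p q r where
    p: "\<forall>i<d. y!i = a!i + p * (b!i - a!i)" and
    q: "\<forall>i<d. z!i = a!i + q * (c!i - a!i)" and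
    r: "\<forall>i<d. x!i = y!i + r * (z!i - y!i)"
    using Col_iff_nth_neq[OF L(1) yz(1) L(2)] Col_iff_nth_neq[OF L(1) yz(2) L(3)]
      Col_iff_nth_neq[OF yz(1) L(4) yz(2)] yz(3-6) by metis
  have "x!i = a!i + (p * (1 - r)) * (b!i - a!i) + (r * q) * (c!i - a!i)" if "i < d" for i
  proof -
    have xi: "x!i = y!i + r * (z!i - y!i)" and yi: "y!i = a!i + p * (b!i - a!i)"
      and zi: "z!i = a!i + q * (c!i - a!i)"
      using p q r that by auto
    show ?thesis unfolding xi yi zi by (simp add: algebra_simps)
  qed
  then show ?thesis by blast
qed

lemma in_plane_via_lines:
  assumes L: "length a = d" "length b = d" "length c = d" "length x = d"
    and nc: "\<not> Col a b c" and pq: "p \<noteq> 0 \<or> q \<noteq> 0"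
    and x: "\<forall>i<d. x!i = (a!i + p * (b!i - a!i))
                      + r * ((a!i + q * (c!i - a!i)) - (a!i + p * (b!i - a!i)))"
  shows "in_plane d a b c x"
proof -
  define y where "y = padd a (psmult p (psub b a))"
  define z where "z = padd a (psmult q (psub c a))"
  have Lyz: "length y = d" "length z = d" using L by (simp_all add: y_def z_def)
  have y: "\<forall>i<d. y!i = a!i + p * (b!i - a!i)" and z: "\<forall>i<d. z!i = a!i + q * (c!i - a!i)"
    using L by (simp_all add: y_def z_def)
  have "Col a y b" using Col_iff_nth[OF L(1) Lyz(1) L(2)] y by blast
  moreover have "Col a z c" using Col_iff_nth[OF L(1) Lyz(2) L(3)] z by blast
  moreover have "Col y x z"
  proof -
    have "x!i = y!i + r * (z!i - y!i)" if "i < d" for i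
      using x y z that by simp
    then show ?thesis using Col_iff_nth[OF Lyz(1) L(4) Lyz(2)] by blast
  qed
  moreover have "y \<noteq> z"
  proof
    assume "y = z"
    have "p * (b!i - a!i) + 0 * (c!i - a!i) = 0 * (b!i - a!i) + q * (c!i - a!i)" if "i < d" for i
      using y z that \<open>y = z\<close> by simp
    then have "p = 0 \<and> 0 = q" using not_Col_coeff_unique[OF L(1-3) nc, of p 0 0 q] by blast
    with pq show False by simp
  qed
  ultimately have "Col a y b \<and> Col a z c \<and> y \<noteq> z \<and> Col y x z" by blast
  then show ?thesis unfolding in_plane_def using Lyz by (intro bexI[of _ y] bexI[of _ z]) simp_all
qed

text \<open>The third field element \<open>r\<close> is needed to write every point of the plane as a point of a
  line joining a point of \<open>ab\<close> to a point of \<open>ac\<close>; over \<open>GF(2)\<close> this fails.\<close>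

lemma in_planeI:
  fixes a :: "'a::field list" and r :: 'a
  assumes L: "length a = d" "length b = d" "length c = d" "length x = d"
    and nc: "\<not> Col a b c" and r: "r \<noteq> 0" "r \<noteq> 1"
    and x: "\<forall>i<d. x!i = a!i + s * (b!i - a!i) + t * (c!i - a!i)"
  shows "in_plane d a b c x"
proof (cases "s = 0 \<and> t = 0")
  case True
  show ?thesis
    by (rule in_plane_via_lines[OF L nc, of 0 1 0]) (use x True in simp_all)
next
  case False
  have "1 - r \<noteq> 0" using r by simp
  have comb: "(a!i + P * (b!i - a!i)) + r * ((a!i + Q * (c!i - a!i)) - (a!i + P * (b!i - a!i)))
        = a!i + ((1 - r) * P) * (b!i - a!i) + (r * Q) * (c!i - a!i)" for P Q i
    by (simp add: algebra_simps)
  have st: "(1 - r) * (s / (1 - r)) = s" "r * (t / r) = t"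
    using r \<open>1 - r \<noteq> 0\<close> by simp_all
  have x': "\<forall>i<d. x!i = (a!i + s / (1 - r) * (b!i - a!i))
          + r * ((a!i + t / r * (c!i - a!i)) - (a!i + s / (1 - r) * (b!i - a!i)))"
    unfolding comb st by (rule x)
  show ?thesis
    by (rule in_plane_via_lines[OF L nc _ x']) (use False r \<open>1 - r \<noteq> 0\<close> in auto)
qed

lemma parallelD:
  assumes L: "length a = d" "length b = d" "length c = d" "length e = d"
    and nc: "\<not> Col a b c" and par: "parallel d a b c e"
  shows "\<exists>s. \<forall>i<d. e!i = c!i + s * (b!i - a!i)"
proof -
  obtain s t where st: "\<forall>i<d. e!i = a!i + s * (b!i - a!i) + t * (c!i - a!i)"
    using in_planeD[OF L nc] par by (auto simp: parallel_def)
  have no_meet: "\<not> (\<exists>x\<in>points d. Col a x b \<and> Col c x e)"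
    using par by (simp add: parallel_def)
  have "t = 1"
  proof (rule ccontr)
    assume "t \<noteq> 1"
    \<comment> \<open>then the line \<open>ce\<close> meets \<open>ab\<close> in the point \<open>x\<close>\<close>
    define l where "l = 1 / (1 - t)"
    have l: "l * (t - 1) = -1" using \<open>t \<noteq> 1\<close> by (simp add: field_simps l_def)
    define x where "x = padd a (psmult (l * s) (psub b a))"
    have Lx: "length x = d" using L by (simp add: x_def)
    have "Col a x b" using Col_iff_nth[OF L(1) Lx L(2)] L by (auto simp: x_def)
    moreover have "x!i = c!i + l * (e!i - c!i)" if "i < d" for i
    proof -
      have "c!i + l * (e!i - c!i) = c!i + (l * s) * (b!i - a!i) + (l * (t - 1)) * (c!i - a!i)"
      proof -
        have ei: "e!i = a!i + s * (b!i - a!i) + t * (c!i - a!i)" using st that by blast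
        show ?thesis unfolding ei by (simp add: algebra_simps)
      qed
      then show ?thesis using L that by (simp add: l x_def)
    qed
    then have "Col c x e" using Col_iff_nth[OF L(3) Lx L(4)] by blast
    ultimately show False using no_meet Lx by auto
  qed
  then have "e!i = c!i + s * (b!i - a!i)" if "i < d" for i
    using st that by simp
  then show ?thesis by blast
qed

lemma parallelI:
  fixes a :: "'a::field list" and r :: 'a
  assumes L: "length a = d" "length b = d" "length c = d" "length e = d"
    and nc: "\<not> Col a b c" and r: "r \<noteq> 0" "r \<noteq> 1"
    and "e \<noteq> c" and e: "\<forall>i<d. e!i = c!i + s * (b!i - a!i)"
  shows "parallel d a b c e"
proof -
  have "b \<noteq> a" using not_Col_neq[OF L(1-3) nc] by simp
  have "in_plane d a b c e"
    by (rule in_planeI[OF L nc r, of s 1]) (use e in simp)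
  moreover have "\<not> Col c x e" if x: "length x = d" "Col a x b" for x
  proof
    assume "Col c x e"
    obtain p where p: "\<forall>i<d. x!i = a!i + p * (b!i - a!i)"
      using Col_iff_nth_neq[OF L(1) x(1) L(2) \<open>b \<noteq> a\<close>] x(2) by blast
    obtain l where l: "\<forall>i<d. x!i = c!i + l * (e!i - c!i)"
      using Col_iff_nth_neq[OF L(3) x(1) L(4) \<open>e \<noteq> c\<close>] \<open>Col c x e\<close> by blast
    have "p * (b!i - a!i) + 0 * (c!i - a!i) = (l * s) * (b!i - a!i) + 1 * (c!i - a!i)"
      if "i < d" for i
      using p[rule_format, OF that] l[rule_format, OF that] e[rule_format, OF that]
      by (simp add: algebra_simps)
    then have "p = l * s \<and> (0::'a) = 1"
      using not_Col_coeff_unique[OF L(1-3) nc, of p 0 "l * s" 1] by blast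
    then show False by simp
  qed
  ultimately show ?thesis unfolding parallel_def Bex_def in_points by blast
qed

definition par_vertex :: "nat \<Rightarrow> 'a::field list \<Rightarrow> 'a list \<Rightarrow> 'a list \<Rightarrow> 'a list" where
  "par_vertex d a b c = map (\<lambda>i. b!i + c!i - a!i) [0..<d]"

lemma length_par_vertex [simp]: "length (par_vertex d a b c) = d"
  by (simp add: par_vertex_def)

lemma nth_par_vertex [simp]: "i < d \<Longrightarrow> par_vertex d a b c ! i = b!i + c!i - a!i"
  by (simp add: par_vertex_def)

lemma par_vertex_same12 [simp]: "length c = d \<Longrightarrow> par_vertex d a a c = c"
  by (rule points_eqI[of _ d]) simp_all

lemma par_vertex_same13 [simp]: "length b = d \<Longrightarrow> par_vertex d a b a = b"
  by (rule points_eqI[of _ d]) simp_all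

lemma par_vertex_commute: "par_vertex d a c b = par_vertex d a b c"
  by (rule points_eqI[of _ d]) (simp_all add: algebra_simps)

lemma parallel_par_vertex:
  fixes a :: "'a::field list" and r :: 'a
  assumes L: "length a = d" "length b = d" "length c = d"
    and nc: "\<not> Col a b c" and r: "r \<noteq> 0" "r \<noteq> 1"
  shows "parallel d a b c (par_vertex d a b c)"
proof (rule parallelI[OF L length_par_vertex nc r])
  have "b \<noteq> a" using not_Col_neq[OF L nc] by simp
  then obtain i where "i < d" "b!i \<noteq> a!i" using points_eqI[OF L(2,1)] by blast
  then have "par_vertex d a b c ! i \<noteq> c!i" by simp
  then show "par_vertex d a b c \<noteq> c" by metis
  show "\<forall>i<d. par_vertex d a b c ! i = c!i + 1 * (b!i - a!i)" by simp
qed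

lemma not_Col_par_vertex:
  assumes L: "length a = d" "length b = d" "length c = d" "length p = d"
    and "b \<noteq> a" "Col a b c" and nc: "\<not> Col a b p"
  shows "\<not> Col p (par_vertex d a b p) c"
proof -
  obtain \<mu> where \<mu>: "\<forall>i<d. c!i = a!i + \<mu> * (b!i - a!i)"
    using assms Col_commute23[OF L(1-3)] Col_iff_nth_neq[OF L(1,3,2)] by blast
  have "indep2 d (psub (par_vertex d a b p) p) (psub c p)"
  proof (rule indep2I)
    fix s t assume st: "\<forall>i<d. s * psub (par_vertex d a b p) p!i + t * psub c p!i = 0"
    have "(s + t * \<mu>) * (b!i - a!i) + (- t) * (p!i - a!i) = 0 * (b!i - a!i) + 0 * (p!i - a!i)"
      if i: "i < d" for i
    proof -
      have "s * (b!i - a!i) + t * (c!i - p!i) = 0" using st i L by (simp add: algebra_simps)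
      moreover have "c!i = a!i + \<mu> * (b!i - a!i)" using \<mu> i by simp
      ultimately show ?thesis by (simp add: algebra_simps)
    qed
    then have "s + t * \<mu> = 0 \<and> - t = 0"
      using not_Col_coeff_unique[OF L(1,2,4) nc, of "s + t * \<mu>" "- t" 0 0] by blast
    then show "s = 0 \<and> t = 0" by auto
  qed
  then show ?thesis using not_Col_iff_indep2[OF L(4) length_par_vertex L(3)] by simp
qed

section \<open>Collineations are semi-affine\<close>

locale collineation =
  fixes d :: nat and g :: "'a::field list \<Rightarrow> 'a list"
  assumes two_le_d: "2 \<le> d"
    and bij: "bij_betw g (points d) (points d)"
    and Col_g: "\<And>p q r. length p = d \<Longrightarrow> length q = d \<Longrightarrow> length r = d \<Longrightarrow>
        Col (g p) (g q) (g r) \<longleftrightarrow> Col p q r"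
    and three_elements: "\<exists>r::'a. r \<noteq> 0 \<and> r \<noteq> 1"
begin

lemma length_g [simp]: "length p = d \<Longrightarrow> length (g p) = d"
  using bij by (auto simp: bij_betw_def)

lemma g_eq_iff: "length p = d \<Longrightarrow> length q = d \<Longrightarrow> g p = g q \<longleftrightarrow> p = q"
  using bij by (auto simp: bij_betw_def inj_on_def)

lemma g_surj:
  assumes "length y = d"
  shows "\<exists>p. length p = d \<and> g p = y"
proof -
  have "y \<in> g ` points d" using bij assms by (simp add: bij_betw_def)
  then show ?thesis by auto
qed

lemma bex_points_g: "(\<exists>y\<in>points d. P y) \<longleftrightarrow> (\<exists>y\<in>points d. P (g y))"
proof
  assume "\<exists>y\<in>points d. P y"
  then obtain y where "length y = d" "P y" by auto
  moreover obtain p where "length p = d" "g p = y" using g_surj[OF \<open>length y = d\<close>] by blast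
  ultimately show "\<exists>y\<in>points d. P (g y)" by (intro bexI[of _ p]) simp_all
next
  assume "\<exists>y\<in>points d. P (g y)"
  then obtain y where "length y = d" "P (g y)" by auto
  then show "\<exists>y\<in>points d. P y" by (intro bexI[of _ "g y"]) simp_all
qed

lemma not_Col_g:
  "length a = d \<Longrightarrow> length b = d \<Longrightarrow> length c = d \<Longrightarrow> \<not> Col a b c \<Longrightarrow> \<not> Col (g a) (g b) (g c)"
  using Col_g by blast

lemma in_plane_g:
  assumes "length a = d" "length b = d" "length c = d" "length x = d"
  shows "in_plane d (g a) (g b) (g c) (g x) \<longleftrightarrow> in_plane d a b c x"
proof -
  have "in_plane d (g a) (g b) (g c) (g x) \<longleftrightarrow>
     (\<exists>y\<in>points d. \<exists>z\<in>points d. Col (g a) (g y) (g b) \<and> Col (g a) (g z) (g c) \<and>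
        g y \<noteq> g z \<and> Col (g y) (g x) (g z))"
    unfolding in_plane_def by (subst bex_points_g) (subst bex_points_g, rule refl)
  also have "\<dots> \<longleftrightarrow> in_plane d a b c x"
    unfolding in_plane_def using assms by (intro bex_cong refl) (simp add: Col_g g_eq_iff)
  finally show ?thesis .
qed

lemma parallel_g:
  assumes "length a = d" "length b = d" "length c = d" "length e = d"
  shows "parallel d (g a) (g b) (g c) (g e) \<longleftrightarrow> parallel d a b c e"
proof -
  have "(\<exists>x\<in>points d. Col (g a) x (g b) \<and> Col (g c) x (g e)) \<longleftrightarrow>
        (\<exists>x\<in>points d. Col a x b \<and> Col c x e)"
    using assms by (subst bex_points_g) (intro bex_cong refl, simp add: Col_g)
  then show ?thesis unfolding parallel_def using in_plane_g[OF assms] by simp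
qed

text \<open>The fourth vertex of the parallelogram on \<open>a, b, c\<close> is the intersection of the parallel
  to \<open>ab\<close> through \<open>c\<close> with the parallel to \<open>ac\<close> through \<open>b\<close>.\<close>

lemma g_par_vertex_not_Col:
  assumes L: "length a = d" "length b = d" "length c = d" and nc: "\<not> Col a b c"
  shows "g (par_vertex d a b c) = par_vertex d (g a) (g b) (g c)"
proof -
  obtain r :: 'a where r: "r \<noteq> 0" "r \<noteq> 1" using three_elements by blast
  define e where "e = par_vertex d a b c"
  have Le: "length e = d" by (simp add: e_def)
  have nc': "\<not> Col a c b" using nc Col_commute23[OF L] by blast
  have "parallel d a b c e" "parallel d a c b e"
    using parallel_par_vertex[OF L nc r] parallel_par_vertex[OF L(1,3,2) nc' r]
    by (simp_all add: e_def par_vertex_commute)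
  then have "parallel d (g a) (g b) (g c) (g e)" "parallel d (g a) (g c) (g b) (g e)"
    using parallel_g[OF L Le] parallel_g[OF L(1,3,2) Le] by simp_all
  moreover have gnc: "\<not> Col (g a) (g b) (g c)" "\<not> Col (g a) (g c) (g b)"
    using not_Col_g[OF L nc] not_Col_g[OF L(1,3,2) nc'] .
  moreover have gL: "length (g a) = d" "length (g b) = d" "length (g c) = d" "length (g e) = d"
    using L Le by simp_all
  ultimately obtain s1 s2 where
    s1: "\<forall>i<d. g e!i = g c!i + s1 * (g b!i - g a!i)" and
    s2: "\<forall>i<d. g e!i = g b!i + s2 * (g c!i - g a!i)"
    using parallelD[OF gL gnc(1)] parallelD[OF gL(1,3,2,4) gnc(2)] by blast
  have "s1 * (g b!i - g a!i) + 1 * (g c!i - g a!i) = 1 * (g b!i - g a!i) + s2 * (g c!i - g a!i)"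
    if "i < d" for i
    using s1[rule_format, OF that] s2[rule_format, OF that] by (simp add: algebra_simps)
  then have "s1 = 1"
    using not_Col_coeff_unique[OF gL(1-3) gnc(1), of s1 1 1 s2] by blast
  then have "g e = par_vertex d (g a) (g b) (g c)"
    using s1 gL by (intro points_eqI[of _ d]) (simp_all add: \<open>s1 = 1\<close> algebra_simps)
  then show ?thesis by (simp add: e_def)
qed


text \<open>The collinear case reduces to the non-collinear one through an auxiliary parallelogram
  \<open>a b q p\<close> with \<open>p\<close> off the line \<open>ab\<close>.\<close>

lemma g_par_vertex:
  assumes L: "length a = d" "length b = d" "length c = d"
  shows "g (par_vertex d a b c) = par_vertex d (g a) (g b) (g c)"
proof -
  consider "b = a" | "c = a" | "\<not> Col a b c" | "b \<noteq> a" "Col a b c" by blast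
  then show ?thesis
  proof cases
    case 4
    obtain p where p: "length p = d" "\<not> Col a b p"
      using exists_not_Col[OF two_le_d L(1,2) 4(1)] by blast
    define q where "q = par_vertex d a b p"
    have Lq: "length q = d" by (simp add: q_def)
    have ncq: "\<not> Col p q c" unfolding q_def by (rule not_Col_par_vertex[OF L p(1) 4 p(2)])
    have "par_vertex d a b c = par_vertex d p q c"
      by (rule points_eqI[of _ d]) (simp_all add: q_def)
    moreover have "g q = par_vertex d (g a) (g b) (g p)"
      unfolding q_def by (rule g_par_vertex_not_Col[OF L(1,2) p])
    then have "par_vertex d (g p) (g q) (g c) = par_vertex d (g a) (g b) (g c)"
      using L p(1) by (intro points_eqI[of _ d]) simp_all
    ultimately show ?thesis using g_par_vertex_not_Col[OF p(1) Lq L(3) ncq] by simp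
  qed (use L g_par_vertex_not_Col[OF L] in simp_all)
qed

definition lin :: "'a list \<Rightarrow> 'a list" where
  "lin x = psub (g x) (g (zvec d))"

lemma length_lin [simp]: "length x = d \<Longrightarrow> length (lin x) = d"
  by (simp add: lin_def)

lemma lin_zvec [simp]: "lin (zvec d) = zvec d"
  by (rule points_eqI[of _ d]) (simp_all add: lin_def)

lemma g_eq_lin: "length p = d \<Longrightarrow> g p = padd (lin p) (g (zvec d))"
  by (rule points_eqI[of _ d]) (simp_all add: lin_def)

lemma lin_add:
  assumes "length x = d" "length y = d"
  shows "lin (padd x y) = padd (lin x) (lin y)"
proof -
  have "padd x y = par_vertex d (zvec d) x y"
    by (rule points_eqI[of _ d]) (simp_all add: assms)
  then have "g (padd x y) = par_vertex d (g (zvec d)) (g x) (g y)"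
    using g_par_vertex[of "zvec d" x y] assms by simp
  then show ?thesis by (intro points_eqI[of _ d]) (simp_all add: assms lin_def)
qed

lemma lin_eq_iff:
  assumes "length x = d" "length y = d"
  shows "lin x = lin y \<longleftrightarrow> x = y"
proof
  assume E: "lin x = lin y"
  have "g x!i = g y!i" if "i < d" for i
    using arg_cong[OF E, of "\<lambda>v. v!i"] that assms by (simp add: lin_def)
  then have "g x = g y" by (intro points_eqI[of _ d]) (simp_all add: assms)
  then show "x = y" using g_eq_iff assms by simp
qed simp

lemma lin_surj:
  assumes "length y = d"
  shows "\<exists>p. length p = d \<and> lin p = y"
proof -
  obtain p where p: "length p = d" "g p = padd y (g (zvec d))"
    using g_surj[of "padd y (g (zvec d))"] assms by auto
  have "lin p = y" by (rule points_eqI[of _ d]) (simp_all add: p assms lin_def)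
  with p(1) show ?thesis by blast
qed

lemma Col_lin:
  assumes "length p = d" "length q = d" "length r = d"
  shows "Col (lin p) (lin q) (lin r) \<longleftrightarrow> Col p q r"
  unfolding lin_def using Col_psub_iff[of "g p" d "g q" "g r" "g (zvec d)"] Col_g[OF assms] assms
  by simp

lemma lin_neq_zvec: "length v = d \<Longrightarrow> v \<noteq> zvec d \<Longrightarrow> lin v \<noteq> zvec d"
  using lin_eq_iff[of v "zvec d"] by simp

lemma lin_smult_ex:
  assumes v: "length v = d" "v \<noteq> zvec d"
  shows "\<exists>m. lin (psmult l v) = psmult m (lin v)"
proof -
  have "Col (zvec d) (psmult l v) v"
    using Col_iff_nth[of "zvec d" d "psmult l v" v] v by auto
  then have "Col (zvec d) (lin (psmult l v)) (lin v)"
    using Col_lin[of "zvec d" "psmult l v" v] v by simp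
  then obtain m where m: "\<forall>i<d. lin (psmult l v)!i = zvec d!i + m * (lin v!i - zvec d!i)"
    using Col_iff_nth_neq[of "zvec d" d "lin (psmult l v)" "lin v"] v lin_neq_zvec[OF v] by auto
  have "lin (psmult l v) = psmult m (lin v)"
    by (rule points_eqI[of _ d]) (use m v in simp_all)
  then show ?thesis by blast
qed

text \<open>Compare the factors with the one for \<open>v + w\<close>, using additivity of \<^const>\<open>lin\<close>.\<close>

lemma lin_smult_factor_eq:
  assumes L: "length v = d" "length w = d" and nc: "\<not> Col (zvec d) v w"
    and m: "lin (psmult l v) = psmult m (lin v)" and n: "lin (psmult l w) = psmult n (lin w)"
  shows "m = n"
proof -
  have I: "indep2 d v w" using not_Col_zvec_iff_indep2 L nc by blast
  have "padd v w \<noteq> zvec d"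
  proof
    assume "padd v w = zvec d"
    then have "\<forall>i<d. 1 * v!i + 1 * w!i = 0"
      using L by (metis mult_1 nth_padd nth_zvec)
    from indep2D[OF I this] show False by simp
  qed
  then obtain k where k: "lin (psmult l (padd v w)) = psmult k (lin (padd v w))"
    using lin_smult_ex[of "padd v w" l] L by fastforce
  have "psmult l (padd v w) = padd (psmult l v) (psmult l w)"
    by (rule points_eqI[of _ d]) (simp_all add: L algebra_simps)
  then have "lin (psmult l (padd v w)) = padd (psmult m (lin v)) (psmult n (lin w))"
    using lin_add[of "psmult l v" "psmult l w"] L m n by simp
  with k have E: "psmult k (padd (lin v) (lin w)) = padd (psmult m (lin v)) (psmult n (lin w))"
    using lin_add[OF L] by simp
  have "\<not> Col (lin (zvec d)) (lin v) (lin w)" using Col_lin[of "zvec d" v w] L nc by simp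
  then have I': "indep2 d (lin v) (lin w)" using not_Col_zvec_iff_indep2[of "lin v" d "lin w"] L by simp
  have "m * lin v!i + n * lin w!i = k * lin v!i + k * lin w!i" if "i < d" for i
    using arg_cong[OF E, of "\<lambda>x. x!i"] that L by (simp add: algebra_simps)
  then show ?thesis using indep2_coeff_unique[OF I', of m n k k] by blast
qed

definition alpha :: "'a \<Rightarrow> 'a" where
  "alpha l = (THE m. lin (psmult l (uvec d 0)) = psmult m (lin (uvec d 0)))"

lemma lin_uvec0_neq_zvec: "lin (uvec d 0) \<noteq> zvec d"
  using lin_neq_zvec[of "uvec d 0"] uvec_neq_zvec[of 0 d] two_le_d by simp

lemma lin_smult_uvec0: "lin (psmult l (uvec d 0)) = psmult (alpha l) (lin (uvec d 0))"
proof -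
  obtain m where m: "lin (psmult l (uvec d 0)) = psmult m (lin (uvec d 0))"
    using lin_smult_ex[of "uvec d 0" l] uvec_neq_zvec[of 0 d] two_le_d by auto
  moreover have "alpha l = m" unfolding alpha_def
  proof (rule the_equality)
    fix m' assume "lin (psmult l (uvec d 0)) = psmult m' (lin (uvec d 0))"
    with m show "m' = m"
      using psmult_right_cancel[of "lin (uvec d 0)" d m' m] lin_uvec0_neq_zvec by simp
  qed (rule m)
  ultimately show ?thesis by simp
qed


lemma indep2_uvec01: "indep2 d (uvec d 0 :: 'a list) (uvec d 1)"
proof (rule indep2I)
  fix s t :: 'a assume st: "\<forall>i<d. s * uvec d 0 ! i + t * uvec d 1 ! i = 0"
  then show "s = 0 \<and> t = 0" using st[rule_format, of 0] st[rule_format, of 1] two_le_d by simp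
qed

lemma lin_smult:
  assumes v: "length v = d"
  shows "lin (psmult l v) = psmult (alpha l) (lin v)"
proof (cases "v = zvec d")
  case True
  then have "psmult l v = zvec d" "psmult (alpha l) (lin v) = zvec d"
    by (auto intro!: points_eqI[of _ d])
  then show ?thesis by simp
next
  case False
  let ?e0 = "uvec d 0 :: 'a list" and ?e1 = "uvec d 1 :: 'a list"
  have d: "0 < d" "1 < d" using two_le_d by auto
  obtain m where m: "lin (psmult l v) = psmult m (lin v)"
    using lin_smult_ex[OF v False] by blast
  obtain m1 where m1: "lin (psmult l ?e1) = psmult m1 (lin ?e1)"
    using lin_smult_ex[of ?e1 l] uvec_neq_zvec[OF d(2)] by auto
  have "\<not> Col (zvec d) ?e0 ?e1"
    using not_Col_zvec_iff_indep2[of ?e0 d ?e1] indep2_uvec01 by simp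
  then have "m1 = alpha l"
    using lin_smult_factor_eq[of ?e0 ?e1 l "alpha l" m1] lin_smult_uvec0 m1 by simp
  show ?thesis
  proof (cases "Col (zvec d) v ?e0")
    case False
    then have "m = alpha l" using lin_smult_factor_eq[of v ?e0 l m "alpha l"] lin_smult_uvec0 m v by simp
    then show ?thesis using m by simp
  next
    case True
    then obtain c where c: "\<forall>i<d. v!i = c * ?e0!i"
      using Col_iff_nth_neq[of "zvec d" d v ?e0] v uvec_neq_zvec[OF d(1)] by auto
    have "c \<noteq> 0"
    proof
      assume "c = 0"
      then have "v = zvec d" using c v by (intro points_eqI[of _ d]) simp_all
      with \<open>v \<noteq> zvec d\<close> show False ..
    qed
    have "indep2 d v ?e1"
    proof (rule indep2I)
      fix s t :: 'a assume st: "\<forall>i<d. s * v!i + t * ?e1!i = 0"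
      then show "s = 0 \<and> t = 0"
        using st[rule_format, of 0] st[rule_format, of 1] c[rule_format, of 0] c[rule_format, of 1]
          d \<open>c \<noteq> 0\<close> by simp
    qed
    then have "\<not> Col (zvec d) v ?e1" using not_Col_zvec_iff_indep2[of v d ?e1] v by simp
    then have "m = m1" using lin_smult_factor_eq[of v ?e1 l m m1] m m1 v by simp
    then show ?thesis using m \<open>m1 = alpha l\<close> by simp
  qed
qed

lemma alpha_uvec0_cancel: "psmult x (lin (uvec d 0)) = psmult y (lin (uvec d 0)) \<Longrightarrow> x = y"
  using psmult_right_cancel[OF _ lin_uvec0_neq_zvec] two_le_d by simp

lemma alpha_add: "alpha (x + y) = alpha x + alpha y"
proof -
  let ?e = "uvec d 0 :: 'a list"
  have "psmult (alpha (x + y)) (lin ?e) = lin (psmult (x + y) ?e)"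
    by (rule lin_smult_uvec0[symmetric])
  also have "psmult (x + y) ?e = padd (psmult x ?e) (psmult y ?e)"
    by (rule points_eqI[of _ d]) (simp_all add: algebra_simps)
  also have "lin \<dots> = padd (psmult (alpha x) (lin ?e)) (psmult (alpha y) (lin ?e))"
    by (simp add: lin_add lin_smult_uvec0)
  also have "\<dots> = psmult (alpha x + alpha y) (lin ?e)"
    by (rule points_eqI[of _ d]) (simp_all add: algebra_simps)
  finally show ?thesis by (rule alpha_uvec0_cancel)
qed

lemma alpha_mult: "alpha (x * y) = alpha x * alpha y"
proof -
  let ?e = "uvec d 0 :: 'a list"
  have "psmult (alpha (x * y)) (lin ?e) = lin (psmult (x * y) ?e)"
    by (rule lin_smult_uvec0[symmetric])
  also have "psmult (x * y) ?e = psmult x (psmult y ?e)"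
    by (rule points_eqI[of _ d]) (simp_all add: algebra_simps)
  also have "lin \<dots> = psmult (alpha x) (psmult (alpha y) (lin ?e))"
    by (simp add: lin_smult lin_smult_uvec0)
  also have "\<dots> = psmult (alpha x * alpha y) (lin ?e)"
    by (rule points_eqI[of _ d]) (simp_all add: algebra_simps)
  finally show ?thesis by (rule alpha_uvec0_cancel)
qed

lemma alpha_1: "alpha 1 = 1"
proof -
  have "psmult 1 (uvec d 0) = (uvec d 0 :: 'a list)" "psmult 1 (lin (uvec d 0)) = lin (uvec d 0)"
    by (rule points_eqI[of _ d]; simp)+
  then show ?thesis using lin_smult_uvec0[of 1] alpha_uvec0_cancel[of "alpha 1" 1] by simp
qed

lemma alpha_0: "alpha 0 = 0"
  using alpha_add[of 0 0] by (metis add.right_neutral add_left_cancel)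

lemma inj_alpha: "inj alpha"
proof (rule injI)
  fix x y assume "alpha x = alpha y"
  then have "lin (psmult x (uvec d 0)) = lin (psmult y (uvec d 0))" using lin_smult_uvec0 by simp
  then have "psmult x (uvec d 0) = psmult y (uvec d 0 :: 'a list)" using lin_eq_iff by simp
  then show "x = y" using psmult_right_cancel[of "uvec d 0" d x y] uvec_neq_zvec[of 0 d] two_le_d
    by simp
qed

lemma surj_alpha: "surj alpha"
proof -
  let ?e = "uvec d 0 :: 'a list"
  have "?e \<noteq> zvec d" using uvec_neq_zvec[of 0 d] two_le_d by simp
  have "m \<in> range alpha" for m
  proof -
    obtain q where q: "length q = d" "lin q = psmult m (lin ?e)"
      using lin_surj[of "psmult m (lin ?e)"] by auto
    have "Col (zvec d) (lin q) (lin ?e)"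
      using Col_iff_nth[of "zvec d" d "lin q" "lin ?e"] q by auto
    then have "Col (zvec d) q ?e" using Col_lin[of "zvec d" q ?e] q by simp
    then obtain c where c: "\<forall>i<d. q!i = c * ?e!i"
      using Col_iff_nth_neq[of "zvec d" d q ?e] q \<open>?e \<noteq> zvec d\<close> by auto
    have "q = psmult c ?e" by (rule points_eqI[of _ d]) (use c q in simp_all)
    then have "alpha c = m" using q lin_smult_uvec0[of c] alpha_uvec0_cancel by simp
    then show ?thesis by blast
  qed
  then show ?thesis by blast
qed

end

section \<open>Semilinear maps are given by matrices\<close>

lemma length_mat_vec [simp]: "length (mat_vec d M p) = d"
  by (simp add: mat_vec_def)

lemma nth_mat_vec [simp]: "i < d \<Longrightarrow> mat_vec d M p ! i = (\<Sum>j<d. M i j * p ! j)"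
  by (simp add: mat_vec_def)

lemma mat_vec_padd:
  "length x = d \<Longrightarrow> length y = d \<Longrightarrow> mat_vec d M (padd x y) = padd (mat_vec d M x) (mat_vec d M y)"
  by (rule points_eqI[of _ d]) (simp_all add: algebra_simps sum.distrib)

lemma mat_vec_psmult: "length x = d \<Longrightarrow> mat_vec d M (psmult c x) = psmult c (mat_vec d M x)"
  by (rule points_eqI[of _ d]) (simp_all add: algebra_simps sum_distrib_left)

lemma nth_mat_vec_uvec: "k < d \<Longrightarrow> j < d \<Longrightarrow> mat_vec d M (uvec d j) ! k = M k j"
  by (simp add: if_distrib[of "\<lambda>x. M k _ * x"] cong: if_cong)

lemma additive_zvec:
  fixes T :: "'a::field list \<Rightarrow> 'a list"
  assumes length_T: "\<And>x. length x = d \<Longrightarrow> length (T x) = d"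
    and T_add: "\<And>x y. length x = d \<Longrightarrow> length y = d \<Longrightarrow> T (padd x y) = padd (T x) (T y)"
  shows "T (zvec d) = zvec d"
proof -
  have "padd (zvec d) (zvec d) = (zvec d :: 'a list)" by (rule points_eqI[of _ d]) simp_all
  then have E: "T (zvec d) = padd (T (zvec d)) (T (zvec d))" using T_add[of "zvec d" "zvec d"] by simp
  have "T (zvec d) ! i = 0" if "i < d" for i
  proof -
    have "T (zvec d) ! i = T (zvec d) ! i + T (zvec d) ! i"
      using arg_cong[OF E, of "\<lambda>x. x!i"] that by (simp only: nth_padd length_T length_zvec)
    then show ?thesis by (simp only: add_cancel_right_right)
  qed
  then show ?thesis by (intro points_eqI[of _ d]) (simp_all add: length_T)
qed

lemma semilinear_eq_mat_vec:
  fixes T :: "'a::field list \<Rightarrow> 'a list" and \<sigma> :: "'a \<Rightarrow> 'a"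
  assumes length_T: "\<And>x. length x = d \<Longrightarrow> length (T x) = d"
    and T_add: "\<And>x y. length x = d \<Longrightarrow> length y = d \<Longrightarrow> T (padd x y) = padd (T x) (T y)"
    and T_smult: "\<And>c x. length x = d \<Longrightarrow> T (psmult c x) = psmult (\<sigma> c) (T x)"
    and p: "length p = d"
  shows "T p = mat_vec d (\<lambda>i j. T (uvec d j) ! i) (map \<sigma> p)"
proof -
  define pre where "pre k = map (\<lambda>i. if i < k then p!i else 0) [0..<d]" for k
  have T_zvec: "T (zvec d) = zvec d" by (rule additive_zvec[OF length_T T_add])
  have pre: "\<forall>i<d. T (pre k) ! i = (\<Sum>j<k. T (uvec d j) ! i * \<sigma> (p!j))" if "k \<le> d" for k
    using that
  proof (induction k)
    case 0
    have "pre 0 = zvec d" by (rule points_eqI[of _ d]) (simp_all add: pre_def)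
    then show ?case using T_zvec by simp
  next
    case (Suc k)
    have "pre (Suc k) = padd (pre k) (psmult (p!k) (uvec d k))"
      by (rule points_eqI[of _ d]) (auto simp: pre_def less_Suc_eq)
    then have "T (pre (Suc k)) = padd (T (pre k)) (psmult (\<sigma> (p!k)) (T (uvec d k)))"
      using T_add[of "pre k" "psmult (p!k) (uvec d k)"] T_smult[of "uvec d k" "p!k"]
      by (simp add: pre_def)
    then show ?case
      using Suc length_T[of "pre k"] length_T[of "uvec d k"] by (simp add: pre_def algebra_simps)
  qed
  have "pre d = p" by (rule points_eqI[of _ d]) (simp_all add: p pre_def)
  then show ?thesis
    using pre[of d] p length_T by (intro points_eqI[of _ d]) (simp_all add: mult.commute)
qed

lemma bij_mat_vec_invertible:
  fixes M :: "nat \<Rightarrow> nat \<Rightarrow> 'a::field"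
  assumes inj: "\<And>x y. length x = d \<Longrightarrow> length y = d \<Longrightarrow> mat_vec d M x = mat_vec d M y \<Longrightarrow> x = y"
    and surj: "\<And>y. length y = d \<Longrightarrow> \<exists>x. length x = d \<and> mat_vec d M x = y"
  shows "invertible_mat d M"
proof -
  let ?L = "mat_vec d M"
  define L' where "L' y = (SOME x. length x = d \<and> ?L x = y)" for y
  have L': "length (L' y) = d" "?L (L' y) = y" if "length y = d" for y
    using someI_ex[OF surj[OF that]] unfolding L'_def by auto
  have L'_add: "L' (padd x y) = padd (L' x) (L' y)" if "length x = d" "length y = d" for x y
    by (rule inj) (use that L'[OF that(1)] L'[OF that(2)] L'[of "padd x y"]
        mat_vec_padd[of "L' x" d "L' y" M] in simp_all)
  have L'_smult: "L' (psmult c x) = psmult c (L' x)" if "length x = d" for c x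
    by (rule inj) (use that L'[OF that] L'[of "psmult c x"] mat_vec_psmult[of "L' x" d M c] in simp_all)
  define N where "N i j = L' (uvec d j) ! i" for i j
  have L'_eq: "L' y = mat_vec d N y" if "length y = d" for y
    unfolding N_def[abs_def] using semilinear_eq_mat_vec[of d L' id y] that L' L'_add L'_smult
    by simp
  show ?thesis unfolding invertible_mat_def
  proof (intro exI[of _ N] allI impI conjI)
    fix i j assume i: "i < d" and j: "j < d"
    have "(\<Sum>k<d. N i k * M k j) = (\<Sum>k<d. N i k * ?L (uvec d j) ! k)"
      using j by (intro sum.cong refl) (simp del: nth_mat_vec add: nth_mat_vec_uvec)
    also have "\<dots> = mat_vec d N (?L (uvec d j)) ! i"
      by (rule nth_mat_vec[OF i, symmetric])
    also have "\<dots> = L' (?L (uvec d j)) ! i"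
      using L'_eq[of "?L (uvec d j)"] by simp
    also have "L' (?L (uvec d j)) = uvec d j"
      by (rule inj) (simp_all add: L')
    finally show "(\<Sum>k<d. N i k * M k j) = (if i = j then 1 else 0)"
      using i by simp
    have "(\<Sum>k<d. M i k * N k j) = ?L (L' (uvec d j)) ! i"
      using i L'(1)[of "uvec d j"] by (simp add: N_def)
    also have "\<dots> = (if i = j then 1 else 0)" using L'(2)[of "uvec d j"] i by simp
    finally show "(\<Sum>k<d. M i k * N k j) = (if i = j then 1 else 0)" .
  qed
qed

context collineation
begin

definition lin_mat :: "nat \<Rightarrow> nat \<Rightarrow> 'a" where
  "lin_mat i j = lin (uvec d j) ! i"

lemma lin_eq_mat_vec: "length p = d \<Longrightarrow> lin p = mat_vec d lin_mat (map alpha p)"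
  unfolding lin_mat_def by (rule semilinear_eq_mat_vec) (simp_all add: lin_add lin_smult)

lemma alpha_inv [simp]: "alpha (inv alpha y) = y"
  by (rule surj_f_inv_f[OF surj_alpha])

lemma invertible_lin_mat: "invertible_mat d lin_mat"
proof (rule bij_mat_vec_invertible)
  fix x y :: "'a list"
  assume L: "length x = d" "length y = d" and E: "mat_vec d lin_mat x = mat_vec d lin_mat y"
  then have "lin (map (inv alpha) x) = lin (map (inv alpha) y)"
    using lin_eq_mat_vec[of "map (inv alpha) x"] lin_eq_mat_vec[of "map (inv alpha) y"]
    by (simp add: comp_def)
  then have "map alpha (map (inv alpha) x) = map alpha (map (inv alpha) y)"
    using lin_eq_iff L by simp
  then show "x = y" by (simp add: comp_def)
next
  fix y :: "'a list" assume "length y = d"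
  then obtain p where "length p = d" "lin p = y" using lin_surj by blast
  then show "\<exists>x. length x = d \<and> mat_vec d lin_mat x = y"
    using lin_eq_mat_vec by (intro exI[of _ "map alpha p"]) simp
qed

lemma g_eq_semiaffine: "length p = d \<Longrightarrow> g p = padd (mat_vec d lin_mat (map alpha p)) (g (zvec d))"
  using g_eq_lin[of p] lin_eq_mat_vec[of p] by simp

end

section \<open>Betweenness over an ordered field\<close>

context
  fixes r :: "'a::field \<Rightarrow> 'a \<Rightarrow> bool"
  assumes ofr: "ordered_field_rel r"
begin

lemma ord_refl: "r x x"
  and ord_antisym: "r x y \<Longrightarrow> r y x \<Longrightarrow> x = y"
  and ord_trans: "r x y \<Longrightarrow> r y z \<Longrightarrow> r x z"
  and ord_total: "r x y \<or> r y x"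
  and ord_add_right: "r x y \<Longrightarrow> r (x + z) (y + z)"
  and ord_mult_nonneg: "r 0 x \<Longrightarrow> r 0 y \<Longrightarrow> r 0 (x * y)"
  using ofr unfolding ordered_field_rel_def by blast+

lemma ord_iff_diff: "r x y \<longleftrightarrow> r 0 (y - x)"
  using ord_add_right[of x y "- x"] ord_add_right[of 0 "y - x" x] by auto

lemma ord_zero_one: "r 0 1"
proof (rule ccontr)
  assume "\<not> r 0 1"
  then have "r 0 (- 1)" using ord_total ord_iff_diff[of 1 0] by auto
  then have "r 0 ((- 1) * (- 1))" using ord_mult_nonneg by blast
  with \<open>\<not> r 0 1\<close> show False by simp
qed

lemma ord_not_one_zero: "\<not> r 1 0"
  using ord_antisym[OF _ ord_zero_one] by fastforce

lemma ord_add_nonneg: "r 0 x \<Longrightarrow> r 0 y \<Longrightarrow> r 0 (x + y)"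
  using ord_add_right[of 0 x y] ord_trans by fastforce

lemma ord_square: "r 0 (x * x)"
proof (cases "r 0 x")
  case False
  then have "r 0 (- x)" using ord_total ord_iff_diff[of x 0] by auto
  then show ?thesis using ord_mult_nonneg[of "- x" "- x"] by simp
qed (rule ord_mult_nonneg)

lemma ord_inverse: "r 0 x \<Longrightarrow> r 0 (inverse x)"
proof (cases "x = 0")
  case False
  assume "r 0 x"
  then have "r 0 (x * (inverse x * inverse x))" using ord_mult_nonneg ord_square by blast
  then show ?thesis using False by (simp add: mult.assoc[symmetric])
qed (simp add: ord_refl)

lemma ord_one_add_nonzero:
  assumes "r 0 y"
  shows "y + 1 \<noteq> 0"
proof
  assume "y + 1 = 0"
  then have "y = - 1" by (simp add: eq_neg_iff_add_eq_0)
  then have "r 1 0" using assms ord_iff_diff[of 1 0] by simp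
  then show False using ord_not_one_zero by simp
qed

text \<open>The three cases say which of three collinear points lies between the other two.\<close>

lemma ord_unit_interval_cases:
  obtains "r 0 l" "r l 1"
  | c where "r 0 c" "r c 1" "c * (1 - l) = - l"
  | c where "r 0 c" "r c 1" "c * l = 1"
proof -
  consider "r 0 l" "r l 1" | "r l 0" | "r 1 l" using ord_total by blast
  then show ?thesis
  proof cases
    case 2
    have nl: "r 0 (- l)" using 2 ord_iff_diff[of l 0] by simp
    have p1: "r 0 (1 - l)" using ord_add_nonneg[OF ord_zero_one nl] by simp
    have "1 - l \<noteq> 0" using 2 ord_not_one_zero by auto
    define c where "c = (- l) * inverse (1 - l)"
    have "r 0 c" unfolding c_def using ord_mult_nonneg[OF nl ord_inverse[OF p1]] .
    moreover have "1 - c = inverse (1 - l)" using \<open>1 - l \<noteq> 0\<close> by (simp add: c_def field_simps)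
    then have "r c 1" using ord_inverse[OF p1] ord_iff_diff[of c 1] by simp
    moreover have "c * (1 - l) = - l" using \<open>1 - l \<noteq> 0\<close> by (simp add: c_def)
    ultimately show ?thesis by (rule that(2))
  next
    case 3
    have lp: "r 0 l" using ord_trans[OF ord_zero_one 3] .
    have "l \<noteq> 0" using 3 ord_not_one_zero by auto
    define c where "c = inverse l"
    have c0: "r 0 c" unfolding c_def using ord_inverse[OF lp] .
    have "1 - c = (l - 1) * inverse l" using \<open>l \<noteq> 0\<close> by (simp add: c_def field_simps)
    moreover have "r 0 ((l - 1) * inverse l)"
      using ord_mult_nonneg[OF _ ord_inverse[OF lp]] 3 ord_iff_diff[of 1 l] by simp
    ultimately have "r c 1" using ord_iff_diff[of c 1] by simp
    moreover have "c * l = 1" using \<open>l \<noteq> 0\<close> by (simp add: c_def)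
    ultimately show ?thesis using c0 that(3) by blast
  qed (rule that(1))
qed

lemma ord_segment_iff: "(\<exists>c. c * (y + 1) = 1 \<and> r 0 c \<and> r c 1) \<longleftrightarrow> r 0 y"
proof
  assume "\<exists>c. c * (y + 1) = 1 \<and> r 0 c \<and> r c 1"
  then obtain c where c: "c * (y + 1) = 1" "r 0 c" "r c 1" by blast
  have "c \<noteq> 0" using c by auto
  have "r 0 ((1 - c) * inverse c)"
    using ord_mult_nonneg[OF _ ord_inverse[OF c(2)], of "1 - c"] c(3) ord_iff_diff[of c 1] by simp
  moreover have "(1 - c) * inverse c = y" using c \<open>c \<noteq> 0\<close> by (simp add: field_simps)
  ultimately show "r 0 y" by simp
next
  assume y: "r 0 y"
  have p: "r 0 (y + 1)" using ord_add_nonneg[OF y ord_zero_one] .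
  have nz: "y + 1 \<noteq> 0" using ord_one_add_nonzero[OF y] .
  define c where "c = inverse (y + 1)"
  have "c * (y + 1) = 1" using nz by (simp add: c_def)
  moreover have "r 0 c" using ord_inverse[OF p] by (simp add: c_def)
  moreover have "1 - c = y * c" using nz by (simp add: c_def field_simps)
  then have "r c 1" using ord_mult_nonneg[OF y \<open>r 0 c\<close>] ord_iff_diff[of c 1] by simp
  ultimately show "\<exists>c. c * (y + 1) = 1 \<and> r 0 c \<and> r c 1" by blast
qed

end

lemma ordered_field_rel_exists_neq_0_1:
  fixes r :: "'a::field \<Rightarrow> 'a \<Rightarrow> bool"
  assumes "ordered_field_rel r"
  shows "\<exists>x::'a. x \<noteq> 0 \<and> x \<noteq> 1"
proof -
  have "1 + 1 \<noteq> (0::'a)" using ord_one_add_nonzero[OF assms ord_zero_one[OF assms]] .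
  moreover have "1 + 1 \<noteq> (1::'a)" by (metis add_cancel_left_right one_neq_zero)
  ultimately show ?thesis by blast
qed

lemma Bw_iff_nth:
  assumes "length p = d" "length q = d" "length w = d"
  shows "Bw r p q w \<longleftrightarrow> (\<exists>c. (\<forall>i<d. q!i = p!i + c * (w!i - p!i)) \<and> r 0 c \<and> r c 1)"
proof -
  have "q = padd p (psmult c (psub w p)) \<longleftrightarrow> (\<forall>i<d. q!i = p!i + c * (w!i - p!i))" for c
  proof
    assume "\<forall>i<d. q!i = p!i + c * (w!i - p!i)"
    then show "q = padd p (psmult c (psub w p))"
      by (intro points_eqI[of _ d]) (use assms in simp_all)
  qed (use assms in simp)
  then show ?thesis by (simp add: Bw_def)
qed

lemma Bw_imp_Col: "Bw r p q w \<Longrightarrow> Col p q w"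
  by (auto simp: Bw_def Col_def)

lemma Col_iff_Bw:
  assumes ofr: "ordered_field_rel r" and L: "length p = d" "length q = d" "length w = d"
  shows "Col p q w \<longleftrightarrow> Bw r p q w \<or> Bw r q p w \<or> Bw r p w q"
proof
  assume "Col p q w"
  then consider "w = p" | l where "\<forall>i<d. q!i = p!i + l * (w!i - p!i)"
    using Col_iff_nth[OF L] by blast
  then show "Bw r p q w \<or> Bw r q p w \<or> Bw r p w q"
  proof cases
    case 1
    then have "\<forall>i<d. p!i = q!i + 1 * (w!i - q!i)" by simp
    then have "Bw r q p w"
      using Bw_iff_nth[OF L(2,1,3)] ord_zero_one[OF ofr] ord_refl[OF ofr] by blast
    then show ?thesis by blast
  next
    case (2 l)
    then have ql: "q!i = p!i + l * (w!i - p!i)" if "i < d" for i using that by blast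
    from ord_unit_interval_cases[OF ofr, of l] show ?thesis
    proof cases
      case 1
      then show ?thesis using Bw_iff_nth[OF L] 2 by blast
    next
      case (2 c)
      have "p!i = q!i + c * (w!i - q!i)" if "i < d" for i
      proof -
        have "q!i + c * (w!i - q!i) = p!i + (l + c * (1 - l)) * (w!i - p!i)"
          unfolding ql[OF that] by (simp add: algebra_simps)
        then show ?thesis using 2(3) by simp
      qed
      then show ?thesis using Bw_iff_nth[OF L(2,1,3)] 2(1,2) by blast
    next
      case (3 c)
      have "w!i = p!i + c * (q!i - p!i)" if "i < d" for i
      proof -
        have "p!i + c * (q!i - p!i) = p!i + (c * l) * (w!i - p!i)"
          unfolding ql[OF that] by (simp add: algebra_simps)
        then show ?thesis using 3(3) by simp
      qed
      then show ?thesis using Bw_iff_nth[OF L(1,3,2)] 3(1,2) by blast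
    qed
  qed
next
  assume "Bw r p q w \<or> Bw r q p w \<or> Bw r p w q"
  then show "Col p q w"
    using Bw_imp_Col Col_commute12[OF L] Col_commute23[OF L(1,3,2)] by blast
qed

lemma Bw_padd_iff:
  assumes L: "length x = d" "length y = d" "length z = d" "length t = d"
  shows "Bw r (padd x t) (padd y t) (padd z t) \<longleftrightarrow> Bw r x y z"
proof -
  have "(padd y t!i = padd x t!i + c * (padd z t!i - padd x t!i)) \<longleftrightarrow> (y!i = x!i + c * (z!i - x!i))"
    if "i < d" for i c
    using that L by (simp add: algebra_simps)
  then show ?thesis
    using Bw_iff_nth[OF L(1-3)] Bw_iff_nth[of "padd x t" d "padd y t" "padd z t"] L by simp
qed

text \<open>This is how a map preserving betweenness comes to preserve the order of the field.\<close>

lemma Bw_zvec_iff: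
  assumes ofr: "ordered_field_rel r" and w: "length w = d" "w \<noteq> zvec d"
  shows "Bw r (psmult (-1) w) (zvec d) (psmult y w) \<longleftrightarrow> r 0 y"
proof -
  obtain j where j: "j < d" "w!j \<noteq> 0" using neq_zvecE[OF w] .
  have "(\<forall>i<d. zvec d!i = psmult (-1) w!i + c * (psmult y w!i - psmult (-1) w!i))
        \<longleftrightarrow> c * (y + 1) = 1" for c
  proof -
    have "zvec d!i = psmult (-1) w!i + c * (psmult y w!i - psmult (-1) w!i)
          \<longleftrightarrow> (c * (y + 1) - 1) * w!i = 0" if "i < d" for i
      using that w by (auto simp: algebra_simps)
    then show ?thesis using j by auto
  qed
  then have "Bw r (psmult (-1) w) (zvec d) (psmult y w) \<longleftrightarrow> (\<exists>c. c * (y + 1) = 1 \<and> r 0 c \<and> r c 1)"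
    using Bw_iff_nth[of "psmult (-1) w" d "zvec d" "psmult y w" r] w by simp
  also have "\<dots> \<longleftrightarrow> r 0 y" using ord_segment_iff[OF ofr] .
  finally show ?thesis .
qed

context collineation
begin

lemma alpha_diff: "alpha (y - x) = alpha y - alpha x"
  using alpha_add[of "y - x" x] by (simp add: eq_diff_eq)

lemma alpha_nonneg_iff:
  assumes ofr: "ordered_field_rel r"
    and Bw_g: "\<And>p q w. length p = d \<Longrightarrow> length q = d \<Longrightarrow> length w = d \<Longrightarrow>
        Bw r (g p) (g q) (g w) \<longleftrightarrow> Bw r p q w"
  shows "r 0 (alpha y) \<longleftrightarrow> r 0 y"
proof -
  let ?e = "uvec d 0 :: 'a list" and ?t = "g (zvec d)"
  have e: "length ?e = d" "?e \<noteq> zvec d" using uvec_neq_zvec[of 0 d] two_le_d by auto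
  have le: "length (lin ?e) = d" "lin ?e \<noteq> zvec d" using lin_uvec0_neq_zvec by auto
  have "alpha (-1) = -1" using alpha_diff[of 0 1] alpha_0 alpha_1 by simp
  then have g_m1: "g (psmult (-1) ?e) = padd (psmult (-1) (lin ?e)) ?t"
    using g_eq_lin[of "psmult (-1) ?e"] lin_smult_uvec0[of "-1"] by simp
  have g_y: "g (psmult y ?e) = padd (psmult (alpha y) (lin ?e)) ?t"
    using g_eq_lin[of "psmult y ?e"] lin_smult_uvec0[of y] by simp
  have g_0: "?t = padd (zvec d) ?t" by (rule points_eqI[of _ d]) simp_all
  have "r 0 y \<longleftrightarrow> Bw r (psmult (-1) ?e) (zvec d) (psmult y ?e)"
    using Bw_zvec_iff[OF ofr e] by simp
  also have "\<dots> \<longleftrightarrow> Bw r (g (psmult (-1) ?e)) ?t (g (psmult y ?e))"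
    using Bw_g by simp
  also have "\<dots> \<longleftrightarrow> Bw r (padd (psmult (-1) (lin ?e)) ?t) (padd (zvec d) ?t) (padd (psmult (alpha y) (lin ?e)) ?t)"
    by (subst g_0) (simp only: g_m1 g_y)
  also have "\<dots> \<longleftrightarrow> Bw r (psmult (-1) (lin ?e)) (zvec d) (psmult (alpha y) (lin ?e))"
    by (rule Bw_padd_iff) (use le in simp_all)
  also have "\<dots> \<longleftrightarrow> r 0 (alpha y)" using Bw_zvec_iff[OF ofr le] .
  finally show ?thesis by simp
qed

lemma alpha_ord_iff:
  assumes ofr: "ordered_field_rel r"
    and Bw_g: "\<And>p q w. length p = d \<Longrightarrow> length q = d \<Longrightarrow> length w = d \<Longrightarrow>
        Bw r (g p) (g q) (g w) \<longleftrightarrow> Bw r p q w"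
  shows "r (alpha x) (alpha y) \<longleftrightarrow> r x y"
proof -
  have "r (alpha x) (alpha y) \<longleftrightarrow> r 0 (alpha y - alpha x)" by (rule ord_iff_diff[OF ofr])
  also have "\<dots> \<longleftrightarrow> r 0 (alpha (y - x))" by (simp only: alpha_diff)
  also have "\<dots> \<longleftrightarrow> r 0 (y - x)" by (rule alpha_nonneg_iff[OF ofr Bw_g])
  also have "\<dots> \<longleftrightarrow> r x y" by (rule ord_iff_diff[OF ofr, symmetric])
  finally show ?thesis .
qed

lemma field_aut_alpha:
  assumes ofr: "\<And>r. le = Some r \<Longrightarrow> ordered_field_rel r"
    and Bw_g: "\<And>r p q w. le = Some r \<Longrightarrow> length p = d \<Longrightarrow> length q = d \<Longrightarrow> length w = d \<Longrightarrow>
        Bw r (g p) (g q) (g w) \<longleftrightarrow> Bw r p q w"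
  shows "field_aut le alpha"
  unfolding field_aut_def bij_def
proof (intro conjI allI impI)
  fix r x y assume "le = Some r"
  from alpha_ord_iff[OF ofr[OF this] Bw_g[OF this]]
  show "r x y \<longleftrightarrow> r (alpha x) (alpha y)" by (rule sym)
qed (rule inj_alpha surj_alpha alpha_add alpha_mult alpha_0 alpha_1)+

end

section \<open>Automorphisms preserve definable relations\<close>

lemma feval_comp_field_aut: "field_aut le \<sigma> \<Longrightarrow> feval t (\<sigma> \<circ> e) = \<sigma> (feval t e)"
  by (induction t) (auto simp: field_aut_def)

lemma fsat_comp_field_aut:
  assumes \<sigma>: "field_aut le \<sigma>"
  shows "fsat le \<phi> (\<sigma> \<circ> e) \<longleftrightarrow> fsat le \<phi> e"
proof (induction \<phi> arbitrary: e)
  case (FEq s t)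
  have "inj \<sigma>" using \<sigma> by (simp add: field_aut_def bij_def)
  then show ?case unfolding fsat.simps feval_comp_field_aut[OF \<sigma>] by (simp add: inj_eq)
next
  case (FLe s t)
  then show ?case
    unfolding fsat.simps feval_comp_field_aut[OF \<sigma>] using \<sigma> by (cases le) (simp_all add: field_aut_def)
next
  case (FEx n \<phi>)
  have "surj \<sigma>" using \<sigma> by (simp add: field_aut_def bij_def)
  have upd: "(\<sigma> \<circ> e)(n := \<sigma> y) = \<sigma> \<circ> e(n := y)" for y by auto
  have "(\<exists>x. fsat le \<phi> ((\<sigma> \<circ> e)(n := x))) \<longleftrightarrow> (\<exists>y. fsat le \<phi> ((\<sigma> \<circ> e)(n := \<sigma> y)))"
    using \<open>surj \<sigma>\<close> by (metis surjD)
  also have "\<dots> \<longleftrightarrow> (\<exists>y. fsat le \<phi> (e(n := y)))"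
    by (simp only: upd FEx.IH)
  finally show ?case by (simp only: fsat.simps)
qed simp_all

lemma length_concat_points: "\<forall>p\<in>set ps. length p = d \<Longrightarrow> length (concat ps) = d * length ps"
  by (induction ps) auto

lemma to_points_concat: "\<forall>p\<in>set ps. length p = d \<Longrightarrow> to_points d (length ps) (concat ps) = ps"
proof (induction ps)
  case (Cons p ps)
  have "to_points d (length (p # ps)) (concat (p # ps)) =
      map (\<lambda>k. take d (drop (k * d) (p @ concat ps))) (0 # map Suc [0..<length ps])"
    unfolding to_points_def by (simp add: map_upt_Suc del: upt_Suc)
  also have "\<dots> = p # map (\<lambda>k. take d (drop (k * d) (concat ps))) [0..<length ps]"
    using Cons.prems by simp
  also have "\<dots> = p # ps" using Cons by (simp add: to_points_def)
  finally show ?case .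
qed (simp add: to_points_def)

text \<open>The coordinates of the points \<open>ps\<close>, listed consecutively, serve as the assignment for the
  defining formula.\<close>

lemma field_definable_geom_map_field_aut:
  assumes fd: "field_definable_geom le d ar rel" and \<sigma>: "field_aut le \<sigma>"
    and ps: "length ps = ar i" "set ps \<subseteq> points d"
  shows "rel i (map (map \<sigma>) ps) \<longleftrightarrow> rel i ps"
proof -
  obtain \<phi> where \<phi>: "\<And>e. fsat le \<phi> e \<longleftrightarrow> rel i (to_points d (ar i) (map e [0..<d * ar i]))"
    using fd by (auto simp: field_definable_geom_def field_definable_rel_def)
  have Lps: "\<forall>p\<in>set ps. length p = d" using ps(2) by auto
  define e where "e n = concat ps ! n" for n
  have "length (concat ps) = d * ar i" using length_concat_points[OF Lps] ps(1) by simp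
  then have e: "map e [0..<d * ar i] = concat ps"
    by (intro points_eqI[of _ "d * ar i"]) (simp_all add: e_def)
  have e': "map (\<sigma> \<circ> e) [0..<d * ar i] = concat (map (map \<sigma>) ps)"
    using arg_cong[OF e, of "map \<sigma>"] by (simp add: map_concat)
  have "rel i ps \<longleftrightarrow> fsat le \<phi> e" using \<phi> e to_points_concat[OF Lps] ps(1) by simp
  also have "\<dots> \<longleftrightarrow> fsat le \<phi> (\<sigma> \<circ> e)" using fsat_comp_field_aut[OF \<sigma>] by simp
  also have "\<dots> \<longleftrightarrow> rel i (map (map \<sigma>) ps)"
    using \<phi>[of "\<sigma> \<circ> e"] e' to_points_concat[of "map (map \<sigma>) ps" d] Lps ps(1) by simp
  finally show ?thesis by simp
qed

lemma rsat_comp_geom_aut: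
  assumes f: "geom_aut d ar rel f" and e: "\<forall>n. length (e n) = d"
  shows "rsat d ar rel \<phi> (f \<circ> e) \<longleftrightarrow> rsat d ar rel \<phi> e"
  using e
proof (induction \<phi> arbitrary: e)
  case (RRel i vs)
  have "set (map e vs) \<subseteq> points d" using RRel by auto
  then have "length vs = ar i \<Longrightarrow> rel i (map f (map e vs)) \<longleftrightarrow> rel i (map e vs)"
    using f by (simp add: geom_aut_def)
  then show ?case by (simp only: rsat.simps map_map) blast
next
  case (REq m n)
  have "inj_on f (points d)" using f by (simp add: geom_aut_def bij_betw_def)
  then show ?case using REq.prems by (auto dest: inj_onD)
next
  case (REx n \<phi>)
  have img: "f ` points d = points d" using f by (simp add: geom_aut_def bij_betw_def)
  have upd: "(f \<circ> e)(n := f q) = f \<circ> e(n := q)" for q by auto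
  have IH: "rsat d ar rel \<phi> ((f \<circ> e)(n := f q)) \<longleftrightarrow> rsat d ar rel \<phi> (e(n := q))"
    if "q \<in> points d" for q
  proof -
    have "\<forall>m. length ((e(n := q)) m) = d" using REx.prems that by simp
    from REx.IH[OF this] show ?thesis unfolding upd .
  qed
  have "rsat d ar rel (REx n \<phi>) (f \<circ> e) \<longleftrightarrow> (\<exists>q\<in>points d. rsat d ar rel \<phi> ((f \<circ> e)(n := f q)))"
    by (simp only: rsat.simps) (metis img imageE imageI)
  also have "\<dots> \<longleftrightarrow> (\<exists>q\<in>points d. rsat d ar rel \<phi> (e(n := q)))"
    using IH by (rule bex_cong[OF refl])
  finally show ?case by (simp only: rsat.simps)
qed simp_all

lemma geom_definable3_geom_aut:
  assumes T: "geom_definable3 d ar rel T" and f: "geom_aut d ar rel f"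
    and L: "length p = d" "length q = d" "length w = d"
  shows "T (f p) (f q) (f w) \<longleftrightarrow> T p q w"
proof -
  obtain \<phi> where \<phi>: "\<And>e. \<forall>n. e n \<in> points d \<Longrightarrow> rsat d ar rel \<phi> e \<longleftrightarrow> T (e 0) (e 1) (e 2)"
    using T by (auto simp: geom_definable3_def)
  define e where "e n = (if n = 0 then p else if n = 1 then q else w)" for n :: nat
  have Le: "\<forall>n. length (e n) = d" using L by (simp add: e_def)
  moreover have "\<forall>n. length (f (e n)) = d"
    using f Le by (auto simp: geom_aut_def bij_betw_def)
  ultimately have "T (f p) (f q) (f w) \<longleftrightarrow> rsat d ar rel \<phi> (f \<circ> e)"
    using \<phi>[of "f \<circ> e"] by (simp add: e_def)
  also have "\<dots> \<longleftrightarrow> rsat d ar rel \<phi> e" using rsat_comp_geom_aut[OF f Le] .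
  also have "\<dots> \<longleftrightarrow> T p q w" using \<phi>[of e] Le by (simp add: e_def)
  finally show ?thesis .
qed

section \<open>Decomposition of the automorphisms\<close>

lemma field_aut_inv:
  assumes \<sigma>: "field_aut le \<sigma>"
  shows "field_aut le (inv \<sigma>)"
proof -
  have b: "bij \<sigma>" and add: "\<And>x y. \<sigma> (x + y) = \<sigma> x + \<sigma> y"
    and mult: "\<And>x y. \<sigma> (x * y) = \<sigma> x * \<sigma> y" and "\<sigma> 0 = 0" "\<sigma> 1 = 1"
    and ord: "\<And>r x y. le = Some r \<Longrightarrow> r x y \<longleftrightarrow> r (\<sigma> x) (\<sigma> y)"
    using \<sigma> by (auto simp: field_aut_def)
  have inv_f: "inv \<sigma> (\<sigma> x) = x" and f_inv: "\<sigma> (inv \<sigma> x) = x" for x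
    using b by (simp_all add: bij_def surj_f_inv_f)
  have "inv \<sigma> (x + y) = inv \<sigma> x + inv \<sigma> y" for x y
    using inv_f[of "inv \<sigma> x + inv \<sigma> y"] by (simp add: add f_inv)
  moreover have "inv \<sigma> (x * y) = inv \<sigma> x * inv \<sigma> y" for x y
    using inv_f[of "inv \<sigma> x * inv \<sigma> y"] by (simp add: mult f_inv)
  moreover have "inv \<sigma> 0 = 0" "inv \<sigma> 1 = 1"
    using inv_f[of 0] inv_f[of 1] \<open>\<sigma> 0 = 0\<close> \<open>\<sigma> 1 = 1\<close> by simp_all
  moreover have "r x y \<longleftrightarrow> r (inv \<sigma> x) (inv \<sigma> y)" if "le = Some r" for r x y
    using ord[OF that, of "inv \<sigma> x" "inv \<sigma> y"] by (simp add: f_inv)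
  ultimately show ?thesis using bij_imp_bij_inv[OF b] by (simp add: field_aut_def)
qed

lemma bij_betw_map_points:
  assumes "bij \<sigma>"
  shows "bij_betw (map \<sigma>) (points d) (points d)"
  unfolding bij_betw_def
proof
  show "inj_on (map \<sigma>) (points d)"
    using assms by (simp add: bij_def inj_mapI inj_on_subset[of _ UNIV])
  have "y \<in> map \<sigma> ` points d" if "length y = d" for y
  proof
    show "y = map \<sigma> (map (inv \<sigma>) y)" using assms by (simp add: comp_def bij_is_surj surj_f_inv_f)
  qed (simp add: that)
  then show "map \<sigma> ` points d = points d" by auto
qed

lemma geom_aut_comp_map:
  assumes fd: "field_definable_geom le d ar rel" and A: "geom_aut d ar rel A"
    and \<sigma>: "field_aut le \<sigma>" and g: "\<forall>p\<in>points d. g p = A (map \<sigma> p)"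
  shows "geom_aut d ar rel g"
proof -
  have "bij_betw (map \<sigma>) (points d) (points d)"
    using \<sigma> by (simp add: field_aut_def bij_betw_map_points)
  then have "bij_betw (A \<circ> map \<sigma>) (points d) (points d)"
    using A bij_betw_trans by (auto simp: geom_aut_def)
  then have "bij_betw g (points d) (points d)"
    using g bij_betw_cong[of "points d" g "A \<circ> map \<sigma>" "points d"] by simp
  moreover have "rel i ps \<longleftrightarrow> rel i (map g ps)" if ps: "length ps = ar i" "set ps \<subseteq> points d" for i ps
  proof -
    have mg: "map g ps = map A (map (map \<sigma>) ps)" using g ps(2) by (auto intro: map_cong)
    have "set (map (map \<sigma>) ps) \<subseteq> points d" using ps(2) by auto
    then have "rel i (map (map \<sigma>) ps) \<longleftrightarrow> rel i (map A (map (map \<sigma>) ps))"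
      using A[unfolded geom_aut_def, THEN conjunct2, rule_format, of "map (map \<sigma>) ps" i] ps(1)
      by simp
    then show ?thesis
      unfolding mg using field_definable_geom_map_field_aut[OF fd \<sigma> ps] by simp
  qed
  ultimately show ?thesis by (simp add: geom_aut_def)
qed

lemma geom_aut_Col_iff:
  assumes ofr: "\<And>r. le = Some r \<Longrightarrow> ordered_field_rel r"
    and cg: "coord_geom le d ar rel" and g: "geom_aut d ar rel g"
    and L: "length p = d" "length q = d" "length w = d"
  shows "Col (g p) (g q) (g w) \<longleftrightarrow> Col p q w"
proof (cases le)
  case None
  then have "geom_definable3 d ar rel Col" using cg by (simp add: coord_geom_def)
  from geom_definable3_geom_aut[OF this g L] show ?thesis .
next
  case (Some r)
  then have "geom_definable3 d ar rel (Bw r)" using cg by (simp add: coord_geom_def)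
  note Bw_g = geom_definable3_geom_aut[OF this g]
  have gL: "length (g x) = d" if "length x = d" for x
    using g that by (auto simp: geom_aut_def bij_betw_def)
  have "Col (g p) (g q) (g w) \<longleftrightarrow>
      Bw r (g p) (g q) (g w) \<or> Bw r (g q) (g p) (g w) \<or> Bw r (g p) (g w) (g q)"
    using Col_iff_Bw[OF ofr[OF Some] gL[OF L(1)] gL[OF L(2)] gL[OF L(3)]] .
  also have "\<dots> \<longleftrightarrow> Bw r p q w \<or> Bw r q p w \<or> Bw r p w q"
    using Bw_g[OF L] Bw_g[OF L(2,1,3)] Bw_g[OF L(1,3,2)] by simp
  also have "\<dots> \<longleftrightarrow> Col p q w" using Col_iff_Bw[OF ofr[OF Some] L] by simp
  finally show ?thesis .
qed

text \<open>The affine part is \<open>A = g \<circ> map (inv \<alpha>)\<close>, which is an automorphism because \<open>g\<close> is and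
  \<open>map (inv \<alpha>)\<close> preserves all field-definable relations.\<close>

lemma geom_aut_decomposition:
  assumes d: "2 \<le> d" and three: "\<exists>x::'a::field. x \<noteq> 0 \<and> x \<noteq> 1"
    and ofr: "\<And>r. le = Some r \<Longrightarrow> ordered_field_rel r"
    and cg: "coord_geom le d ar rel" and fd: "field_definable_geom le d ar rel"
    and g: "geom_aut d ar rel (g :: 'a list \<Rightarrow> 'a list)"
  shows "\<exists>A \<alpha>. aff_aut d ar rel A \<and> field_aut le \<alpha> \<and> (\<forall>p\<in>points d. g p = A (map \<alpha> p))"
proof -
  interpret collineation d g
  proof
    show "bij_betw g (points d) (points d)" using g by (simp add: geom_aut_def)
  qed (use d three geom_aut_Col_iff[OF ofr cg g] in simp_all)
  have Bw_g: "Bw r (g p) (g q) (g w) \<longleftrightarrow> Bw r p q w"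
    if "le = Some r" "length p = d" "length q = d" "length w = d" for r p q w
    using geom_definable3_geom_aut[OF _ g that(2-4)] cg that(1) by (simp add: coord_geom_def)
  have "field_aut le alpha" using field_aut_alpha[OF ofr Bw_g] .
  define A where "A p = padd (mat_vec d lin_mat p) (g (zvec d))" for p
  have "affine_transf d A"
    unfolding affine_transf_def A_def using invertible_lin_mat
    by (intro exI[of _ lin_mat] exI[of _ "g (zvec d)"]) simp
  moreover have gA: "\<forall>p\<in>points d. g p = A (map alpha p)"
  proof
    fix p :: "'a list" assume "p \<in> points d"
    then show "g p = A (map alpha p)" unfolding A_def by (intro g_eq_semiaffine) simp
  qed
  moreover have "geom_aut d ar rel A"
  proof (rule geom_aut_comp_map[OF fd g field_aut_inv[OF \<open>field_aut le alpha\<close>]])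
    show "\<forall>p\<in>points d. A p = g (map (inv alpha) p)"
    proof
      fix p :: "'a list" assume "p \<in> points d"
      then have "g (map (inv alpha) p) = A (map alpha (map (inv alpha) p))" using gA by simp
      then show "A p = g (map (inv alpha) p)" by (simp add: comp_def)
    qed
  qed
  ultimately show ?thesis using \<open>field_aut le alpha\<close> unfolding aff_aut_def by blast
qed

lemma map_psmult_uvec:
  assumes "\<sigma> 0 = 0"
  shows "map \<sigma> (psmult x (uvec d j)) = psmult (\<sigma> x) (uvec d j)"
  by (rule points_eqI[of _ d]) (simp_all add: assms)

lemma mat_vec_uvec0_neq_zvec:
  assumes M: "invertible_mat d M" and d: "0 < d"
  shows "mat_vec d M (uvec d 0) \<noteq> zvec d"
proof
  assume Z: "mat_vec d M (uvec d 0) = zvec d"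
  obtain N where "(\<Sum>k<d. N 0 k * M k 0) = 1"
    using M d unfolding invertible_mat_def by fastforce
  moreover have "M k 0 = 0" if "k < d" for k
    using nth_mat_vec_uvec[OF that d, of M] Z that by simp
  ultimately show False by simp
qed

lemma affine_transf_on_axis:
  assumes "affine_transf d A" "0 < d"
  obtains c b where "length c = d" "c \<noteq> zvec d" "length b = d"
    "\<forall>x. A (psmult x (uvec d 0)) = padd (psmult x c) b"
proof -
  obtain M b where Mb: "length b = d" "invertible_mat d M" "\<forall>p\<in>points d. A p = padd (mat_vec d M p) b"
    using assms(1) by (auto simp: affine_transf_def)
  have "A (psmult x (uvec d 0)) = padd (psmult x (mat_vec d M (uvec d 0))) b" for x
    using Mb(3) mat_vec_psmult[of "uvec d 0" d M x] by simp
  with that[of "mat_vec d M (uvec d 0)" b] Mb(1) mat_vec_uvec0_neq_zvec[OF Mb(2) assms(2)]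
  show thesis by simp
qed

text \<open>Uniqueness is read off on the line through the origin and \<open>e\<^sub>0\<close>: the translation part at
  \<open>x = 0\<close>, the image of \<open>e\<^sub>0\<close> at \<open>x = 1\<close>, and then the field maps.\<close>

lemma affine_transf_comp_map_unique:
  fixes A B :: "'a::field list \<Rightarrow> 'a list" and \<sigma> \<tau> :: "'a \<Rightarrow> 'a"
  assumes d: "0 < d" and A: "affine_transf d A" and B: "affine_transf d B"
    and \<sigma>: "\<sigma> 0 = 0" "\<sigma> 1 = 1" "surj \<sigma>" and \<tau>: "\<tau> 0 = 0" "\<tau> 1 = 1"
    and E: "\<forall>p\<in>points d. A (map \<sigma> p) = B (map \<tau> p)"
  shows "\<sigma> = \<tau> \<and> (\<forall>p\<in>points d. A p = B p)"
proof -
  obtain c b where c: "length c = d" "c \<noteq> zvec d" "length b = d"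
    and Ax: "\<forall>x. A (psmult x (uvec d 0)) = padd (psmult x c) b"
    by (rule affine_transf_on_axis[OF A d])
  obtain c' b' where c': "length c' = d" "length b' = d"
    and Bx: "\<forall>x. B (psmult x (uvec d 0)) = padd (psmult x c') b'"
    using affine_transf_on_axis[OF B d] by metis
  have key: "padd (psmult (\<sigma> x) c) b = padd (psmult (\<tau> x) c') b'" for x
    using E[rule_format, of "psmult x (uvec d 0)"] by (simp add: map_psmult_uvec \<sigma> \<tau> Ax Bx)
  have "b = b'"
    using key[of 0] c c' by (intro points_eqI[of _ d]) (simp_all add: \<sigma> \<tau> list_eq_iff_nth_eq)
  have "c = c'"
    using key[of 1] c c' by (intro points_eqI[of _ d]) (simp_all add: \<sigma> \<tau> \<open>b = b'\<close> list_eq_iff_nth_eq)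
  have "\<sigma> x = \<tau> x" for x
  proof (rule psmult_right_cancel[OF c(1,2)])
    show "psmult (\<sigma> x) c = psmult (\<tau> x) c"
      using key[of x] c c' \<open>b = b'\<close> \<open>c = c'\<close>
      by (intro points_eqI[of _ d]) (simp_all add: list_eq_iff_nth_eq)
  qed
  then have "\<sigma> = \<tau>" ..
  moreover have "A p = B p" if "p \<in> points d" for p
  proof -
    have "map \<sigma> (map (inv \<sigma>) p) = p" using \<sigma>(3) by (simp add: comp_def surj_f_inv_f)
    then show ?thesis using E[rule_format, of "map (inv \<sigma>) p"] that \<open>\<sigma> = \<tau>\<close> by simp
  qed
  ultimately show ?thesis by blast
qed

lemma exists_neq_0_1:
  fixes le :: "('a::field \<Rightarrow> 'a \<Rightarrow> bool) option"
  assumes "case le of Some r \<Rightarrow> ordered_field_rel r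
                  | None \<Rightarrow> (\<exists>x y z :: 'a. x \<noteq> y \<and> y \<noteq> z \<and> x \<noteq> z)"
  shows "\<exists>x::'a. x \<noteq> 0 \<and> x \<noteq> 1"
proof (cases le)
  case None
  then obtain x y z :: 'a where "x \<noteq> y" "y \<noteq> z" "x \<noteq> z" using assms by auto
  then have "(x \<noteq> 0 \<and> x \<noteq> 1) \<or> (y \<noteq> 0 \<and> y \<noteq> 1) \<or> (z \<noteq> 0 \<and> z \<noteq> 1)" by auto
  then show ?thesis by blast
next
  case (Some r)
  then show ?thesis using assms ordered_field_rel_exists_neq_0_1 by simp
qed

lemma geom_aut_iff_decomposition:
  assumes "2 \<le> d" "\<exists>x::'a::field. x \<noteq> 0 \<and> x \<noteq> 1"
    and "\<And>r. le = Some r \<Longrightarrow> ordered_field_rel r"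
    and "coord_geom le d ar rel" and fd: "field_definable_geom le d ar rel"
  shows "geom_aut d ar rel (g :: 'a list \<Rightarrow> 'a list) \<longleftrightarrow>
    (\<exists>A \<alpha>. aff_aut d ar rel A \<and> field_aut le \<alpha> \<and> (\<forall>p\<in>points d. g p = A (map \<alpha> p)))"
proof
  assume "\<exists>A \<alpha>. aff_aut d ar rel A \<and> field_aut le \<alpha> \<and> (\<forall>p\<in>points d. g p = A (map \<alpha> p))"
  then obtain A \<alpha> where "geom_aut d ar rel A" "field_aut le \<alpha>" "\<forall>p\<in>points d. g p = A (map \<alpha> p)"
    by (auto simp: aff_aut_def)
  then show "geom_aut d ar rel g" by (rule geom_aut_comp_map[OF fd])
qed (rule geom_aut_decomposition[OF assms])

theorem proposition4:
  fixes le :: "('a::field \<Rightarrow> 'a \<Rightarrow> bool) option"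
    and d :: nat and ar :: "'i \<Rightarrow> nat" and rel :: "'i \<Rightarrow> 'a list list \<Rightarrow> bool"
  assumes "d \<ge> 2"
    and "case le of Some r \<Rightarrow> ordered_field_rel r
                  | None \<Rightarrow> (\<exists>x y z :: 'a. x \<noteq> y \<and> y \<noteq> z \<and> x \<noteq> z)"
    and "coord_geom le d ar rel"
    and "field_definable_geom le d ar rel"
  shows "(\<forall>g. geom_aut d ar rel g \<longleftrightarrow>
            (\<exists>A \<alpha>. aff_aut d ar rel A \<and> field_aut le \<alpha> \<and>
                   (\<forall>p\<in>points d. g p = (A \<circ> ind_map \<alpha>) p))) \<and>
         (\<forall>g A \<alpha> A' \<alpha>'.
            geom_aut d ar rel g \<and>
            aff_aut d ar rel A \<and> field_aut le \<alpha> \<and> (\<forall>p\<in>points d. g p = (A \<circ> ind_map \<alpha>) p) \<and>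
            aff_aut d ar rel A' \<and> field_aut le \<alpha>' \<and> (\<forall>p\<in>points d. g p = (A' \<circ> ind_map \<alpha>') p)
            \<longrightarrow> \<alpha> = \<alpha>' \<and> (\<forall>p\<in>points d. A p = A' p))"
proof -
  have ofr: "\<And>r. le = Some r \<Longrightarrow> ordered_field_rel r" using assms(2) by auto
  note decomposition =
    geom_aut_iff_decomposition[OF assms(1) exists_neq_0_1[OF assms(2)] ofr assms(3,4)]
  have unique: "\<alpha> = \<alpha>' \<and> (\<forall>p\<in>points d. A p = A' p)"
    if "aff_aut d ar rel A" "field_aut le \<alpha>" "\<forall>p\<in>points d. g p = A (map \<alpha> p)"
      "aff_aut d ar rel A'" "field_aut le \<alpha>'" "\<forall>p\<in>points d. g p = A' (map \<alpha>' p)"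
    for g A \<alpha> A' \<alpha>'
  proof (rule affine_transf_comp_map_unique)
    show "affine_transf d A" "affine_transf d A'" using that(1,4) by (simp_all add: aff_aut_def)
    show "\<alpha> 0 = 0" "\<alpha> 1 = 1" "surj \<alpha>" "\<alpha>' 0 = 0" "\<alpha>' 1 = 1"
      using that(2,5) by (simp_all add: field_aut_def bij_def)
    show "\<forall>p\<in>points d. A (map \<alpha> p) = A' (map \<alpha>' p)" using that(3,6) by simp
  qed (use assms(1) in simp)
  show ?thesis unfolding comp_def ind_map_def
    using decomposition unique by blast
qed

end
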